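(* Let $\lambda>0$, $L\ge1$, and let $\Sigma\in\mathbb{R}^{d\times d}$ be symmetric positive definite with simple spectrum $\sigma_1>\cdots>\sigma_d>0$ and unit eigenvectors $u_1,\dots,u_d$. With $a(\mu)=\mu^\top\Sigma\mu$, $b(\mu)=\mu^\top\Sigma^2\mu$, let \[ \mathcal{R}_{\mathrm{lin},L}(\mu)=\operatorname{tr}(\Sigma)-\tfrac{2\lambda}{L}\operatorname{tr}(\Sigma)a-\tfrac{2\lambda(L+1)}{L}b+\tfrac{\lambda^2(L+2)}{L^2}\operatorname{tr}(\Sigma)a^2+\tfrac{\lambda^2(L+2)(L+3)}{L^2}ab. \] Then $\mathcal{R}_{\mathrm{lin},L}$ is coercive and locally Lipschitz, and the gradient flow $\dot\mu(t)=-\nabla\mathcal{R}_{\mathrm{lin},L}(\mu(t))$ converges to a critical point of $\mathcal{R}_{\mathrm{lin},L}$. For almost every initialization it converges to one of the two global minimizers $\mu^\star=\pm\alpha_1^\star u_1$, where \[ \alpha_1^\star=\sqrt{\frac{\operatorname{tr}(\Sigma)+(L+1)\sigma_1}{\frac{\lambda}{L}\sigma_1(L+2)(\operatorname{tr}(\Sigma)+(L+3)\sigma_1)}}, \] so that $\mu^\star/\|\mu^\star\|=\pm u_1$. Moreover \[ \sigma_1=-\frac{-2\operatorname{tr}(\Sigma)+2\frac{\lambda}{L}(L+2)\operatorname{tr}(\Sigma)\,\mu^{\star\top}\Sigma\mu^\star+\frac{\lambda}{L}(L+2)(L+3)\,\mu^{\star\top}\Sigma^2\mu^\star}{-2(L+1)+\frac{\lambda}{L}(L+2)(L+3)\,\mu^{\star\top}\Sigma\mu^\star}.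 \]
   Context: $\mathcal{R}_{\mathrm{lin},L}(\mu)$ equals $\mathbb{E}\|X_1-\frac{\lambda}{L}\sum_{k=1}^L(X_1^\top\mu\mu^\top X_k)X_k\|^2$ for $X_1,\dots,X_L$ i.i.d. $\mathcal{N}(0,\Sigma)$. *)

theory Defs
  imports "HOL-Analysis.Analysis"
begin

definition R_lin :: "real \<Rightarrow> nat \<Rightarrow> real^'n^'n \<Rightarrow> real^'n \<Rightarrow> real" where
  "R_lin lam L S mu =
     (let a = mu \<bullet> (S *v mu); b = mu \<bullet> ((S ** S) *v mu); tr = trace S; l = real L in
        tr - 2 * lam / l * tr * a - 2 * lam * (l + 1) / l * b
        + lam\<^sup>2 * (l + 2) / l\<^sup>2 * tr * a\<^sup>2
        + lam\<^sup>2 * (l + 2) * (l + 3) / l\<^sup>2 * a * b)"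

definition locally_lipschitz :: "('a::metric_space \<Rightarrow> 'b::metric_space) \<Rightarrow> bool" where
  "locally_lipschitz f \<longleftrightarrow> (\<forall>x. \<exists>e>0. \<exists>C. C-lipschitz_on (ball x e) f)"

definition grad_flow :: "('a::real_inner \<Rightarrow> real) \<Rightarrow> (real \<Rightarrow> 'a) \<Rightarrow> 'a \<Rightarrow> bool" where
  "grad_flow f mu mu0 \<longleftrightarrow> mu 0 = mu0 \<and>
     (\<forall>t\<ge>0. \<exists>g. (GDERIV f (mu t) :> g) \<and> (mu has_vector_derivative (- g)) (at t within {0..}))"

definition critical_point :: "('a::real_inner \<Rightarrow> real) \<Rightarrow> 'a \<Rightarrow> bool" where
  "critical_point f p \<longleftrightarrow> (GDERIV f p :> 0)"

definition alpha1_star :: "real \<Rightarrow> nat \<Rightarrow> real^'n^'n \<Rightarrow> real \<Rightarrow> real" where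
  "alpha1_star lam L S s1 =
     sqrt ((trace S + (real L + 1) * s1) /
           (lam / real L * s1 * (real L + 2) * (trace S + (real L + 3) * s1)))"

end

theory Submission
  imports Defs
begin

text \<open>
  Write \<open>a = \<mu>\<^sup>T \<Sigma> \<mu>\<close> and \<open>b = \<mu>\<^sup>T \<Sigma>\<^sup>2 \<mu>\<close>. The risk is a polynomial \<open>\<Phi>(a, b)\<close>, and \<open>(a, b)\<close> ranges over the
  cone \<open>0 \<le> b \<le> \<sigma>\<^sub>1 a\<close>. On this cone \<open>\<Phi>\<close> is minimal only on the edge \<open>b = \<sigma>\<^sub>1 a\<close>, at one value of \<open>a\<close>;
  the corresponding points are \<open>\<plusminus>\<alpha>\<^sub>1\<^sup>* u\<^sub>1\<close>. In the eigenbasis the critical points are \<open>0\<close> and one pair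
  \<open>\<plusminus>c\<^sub>j u\<^sub>j\<close> on each axis; the critical value at \<open>0\<close> and those on the different axes are pairwise
  distinct.

  The risk is coercive with locally Lipschitz gradient, so the gradient flow exists for all times,
  stays bounded, and its gradient tends to \<open>0\<close>. Hence all its limit points are critical with the
  same value. Each squared eigen-coordinate solves a linear ODE, so the flow never changes the sign
  of a coordinate, and the limit point is unique. Finally, critical points with vanishing first
  coordinate repel in the direction \<open>u\<^sub>1\<close>, so every flow started off the null set \<open>u\<^sub>1\<^sup>\<bottom>\<close> converges
  to \<open>\<plusminus>\<alpha>\<^sub>1\<^sup>* u\<^sub>1\<close>.
\<close>

lemma DERIV_within_nonpos_imp_decreasing:
  fixes f :: "real \<Rightarrow> real"
  assumes "a \<le> b" "{a..b} \<subseteq> T"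
    and deriv: "\<And>t. a \<le> t \<Longrightarrow> t \<le> b \<Longrightarrow> (f has_real_derivative f' t) (at t within T)"
    and nonpos: "\<And>t. a \<le> t \<Longrightarrow> t \<le> b \<Longrightarrow> f' t \<le> 0"
  shows "f b \<le> f a"
proof (rule DERIV_nonpos_imp_decreasing_open[OF \<open>a \<le> b\<close>])
  fix x assume x: "a < x" "x < b"
  have "at x within T = at x"
    using x interior_mono[OF \<open>{a..b} \<subseteq> T\<close>] by (intro at_within_interior) auto
  then show "\<exists>y. (f has_real_derivative y) (at x) \<and> y \<le> 0"
    using deriv[of x] nonpos[of x] x by auto
next
  show "continuous_on {a..b} f"
    unfolding continuous_on_eq_continuous_within
    using deriv assms(2) by (metis DERIV_continuous atLeastAtMost_iff continuous_within_subset)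
qed

lemma has_vector_derivative_bound_imp_dist_le:
  fixes f :: "real \<Rightarrow> 'a::real_normed_vector"
  assumes "convex T"
    and deriv: "\<And>t. t \<in> T \<Longrightarrow> (f has_vector_derivative f' t) (at t within T)"
    and bound: "\<And>t. t \<in> T \<Longrightarrow> norm (f' t) \<le> M"
    and "s \<in> T" "t \<in> T"
  shows "norm (f t - f s) \<le> M * \<bar>t - s\<bar>"
proof -
  have "norm (f t - f s) \<le> M * norm (t - s)"
  proof (rule differentiable_bound[OF \<open>convex T\<close> _ _ \<open>t \<in> T\<close> \<open>s \<in> T\<close>])
    show "(f has_derivative (\<lambda>h. h *\<^sub>R f' x)) (at x within T)" if "x \<in> T" for x
      using deriv[OF that] by (simp add: has_vector_derivative_def)
    show "onorm (\<lambda>h. h *\<^sub>R f' x) \<le> M" if "x \<in> T" for x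
      using onorm_scaleR_left[OF bounded_linear_ident, of "f' x"] onorm_id[where 'a=real] bound[OF that]
      by simp
  qed
  then show ?thesis by simp
qed

lemma has_vector_derivative_integral_equation:
  fixes g :: "real \<Rightarrow> 'a::banach"
  assumes cont: "\<And>b. 0 \<le> b \<Longrightarrow> continuous_on {0..b} g"
    and eq: "\<And>t. 0 \<le> t \<Longrightarrow> x t = x0 + integral {0..t} g" and "0 \<le> t"
  shows "(x has_vector_derivative g t) (at t within {0..})"
proof -
  have "((\<lambda>r. x0 + integral {0..r} g) has_vector_derivative 0 + g t) (at t within {0..t+1})"
    using \<open>0 \<le> t\<close> cont[of "t + 1"]
    by (intro has_vector_derivative_add has_vector_derivative_const integral_has_vector_derivative) auto
  then have "((\<lambda>r. x0 + integral {0..r} g) has_vector_derivative g t) (at t within {0..t+1})" by simp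
  then have "(x has_vector_derivative g t) (at t within {0..t+1})"
    by (rule has_vector_derivative_transform_within[where d=1]) (use \<open>0 \<le> t\<close> eq in auto)
  moreover have "at t within {0..t+1} = at t within {0..}"
    by (rule at_within_nhd[where S="{..<t+1}"]) auto
  ultimately show ?thesis by simp
qed

lemma linear_ode_exp_bounds:
  fixes v \<kappa> :: "real \<Rightarrow> real"
  assumes deriv: "\<And>t. t \<ge> 0 \<Longrightarrow> (v has_real_derivative \<kappa> t * v t) (at t within {0..})"
    and nonneg: "\<And>t. t \<ge> 0 \<Longrightarrow> v t \<ge> 0"
    and bound: "\<And>t. t \<ge> 0 \<Longrightarrow> \<bar>\<kappa> t\<bar> \<le> K"
    and "t \<ge> 0"
  shows "v t \<le> v 0 * exp (K * t)" "v 0 \<le> v t * exp (K * t)"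
proof -
  have "v t * exp (- (K * t)) \<le> v 0 * exp (- (K * 0))"
  proof (rule DERIV_within_nonpos_imp_decreasing[OF \<open>t \<ge> 0\<close>])
    fix s :: real assume s: "0 \<le> s" "s \<le> t"
    show "((\<lambda>s. v s * exp (- (K * s))) has_real_derivative (\<kappa> s - K) * v s * exp (- (K * s)))
        (at s within {0..})"
      by (rule derivative_eq_intros deriv[OF s(1)] refl)+ (simp add: algebra_simps)
    show "(\<kappa> s - K) * v s * exp (- (K * s)) \<le> 0"
      using bound[OF s(1)] nonneg[OF s(1)] by (simp add: mult_nonpos_nonneg)
  qed auto
  then show "v t \<le> v 0 * exp (K * t)" by (simp add: exp_minus field_simps)
  have "- (v t * exp (K * t)) \<le> - (v 0 * exp (K * 0))"
  proof (rule DERIV_within_nonpos_imp_decreasing[OF \<open>t \<ge> 0\<close>])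
    fix s :: real assume s: "0 \<le> s" "s \<le> t"
    show "((\<lambda>s. - (v s * exp (K * s))) has_real_derivative - ((\<kappa> s + K) * v s * exp (K * s)))
        (at s within {0..})"
      by (rule derivative_eq_intros deriv[OF s(1)] refl)+ (simp add: algebra_simps)
    show "- ((\<kappa> s + K) * v s * exp (K * s)) \<le> 0"
      using bound[OF s(1)] nonneg[OF s(1)] by simp
  qed auto
  then show "v 0 \<le> v t * exp (K * t)" by simp
qed

lemma GDERIV_unique:
  assumes "GDERIV f x :> g" "GDERIV f x :> g'"
  shows "g = g'"
proof -
  have "(\<lambda>h. h \<bullet> g) = (\<lambda>h. h \<bullet> g')"
    using assms unfolding gderiv_def by (rule has_derivative_unique)
  then have "(g - g') \<bullet> g = (g - g') \<bullet> g'" by meson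
  then have "(g - g') \<bullet> (g - g') = 0" by (simp add: inner_diff_right)
  then show "g = g'" by simp
qed

lemma GDERIV_chain_vector:
  assumes "GDERIV f (y t) :> g" "(y has_vector_derivative v) (at t within A)"
  shows "((\<lambda>t. f (y t)) has_real_derivative v \<bullet> g) (at t within A)"
proof -
  have "(f has_derivative (\<lambda>h. h \<bullet> g)) (at (y t) within y ` A)"
    using assms(1) unfolding gderiv_def by (rule has_derivative_at_withinI)
  from vector_derivative_diff_chain_within[OF assms(2) this]
  show ?thesis by (simp add: has_real_derivative_iff_has_vector_derivative o_def)
qed

lemma symmetric_matrix_inner:
  fixes M :: "real^'n^'n"
  assumes "transpose M = M"
  shows "(M *v x) \<bullet> y = x \<bullet> (M *v y)"
proof -
  have "M *v x = x v* M" using vector_transpose_matrix[of x M] assms by simp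
  then show ?thesis by (simp add: dot_lmul_matrix)
qed

lemma GDERIV_quadratic_form:
  fixes M :: "real^'n^'n"
  assumes "transpose M = M"
  shows "GDERIV (\<lambda>x. x \<bullet> (M *v x)) x :> 2 *\<^sub>R (M *v x)"
proof -
  have "((\<lambda>x. x \<bullet> (M *v x)) has_derivative (\<lambda>h. h \<bullet> (M *v x) + x \<bullet> (M *v h))) (at x)"
    by (auto intro!: derivative_eq_intros bounded_linear_imp_has_derivative)
  moreover have "(\<lambda>h. h \<bullet> (M *v x) + x \<bullet> (M *v h)) = (\<lambda>h. h \<bullet> (2 *\<^sub>R (M *v x)))"
    using symmetric_matrix_inner[OF assms] by (auto simp: fun_eq_iff inner_commute)
  ultimately show ?thesis unfolding gderiv_def by simp
qed

lemma tendsto_if_limit_points_unique: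
  fixes mu :: "real \<Rightarrow> 'a::heine_borel"
  assumes bdd: "bounded (mu ` {0..})"
    and unique: "\<And>s1 s2 q1 q2. filterlim s1 at_top sequentially \<Longrightarrow> (\<lambda>k. mu (s1 k)) \<longlonglongrightarrow> q1 \<Longrightarrow>
                   filterlim s2 at_top sequentially \<Longrightarrow> (\<lambda>k. mu (s2 k)) \<longlonglongrightarrow> q2 \<Longrightarrow> q1 = q2"
  obtains p s where "filterlim s at_top sequentially" "(\<lambda>k. mu (s k)) \<longlonglongrightarrow> p" "(mu \<longlongrightarrow> p) at_top"
proof -
  have limit_point: "\<exists>q r. strict_mono r \<and> ((\<lambda>k. mu (T k)) \<circ> r) \<longlonglongrightarrow> q"
    if "\<And>k. T k \<ge> 0" for T :: "nat \<Rightarrow> real"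
  proof -
    have "bounded (range (\<lambda>k. mu (T k)))"
      using that by (intro bounded_subset[OF bdd]) auto
    then show ?thesis by (rule bounded_imp_convergent_subsequence)
  qed
  obtain q r where r: "strict_mono r" and q: "((\<lambda>k. mu (real k)) \<circ> r) \<longlonglongrightarrow> q"
    using limit_point[of real] by auto
  define s where "s k = real (r k)" for k
  have s: "filterlim s at_top sequentially"
    unfolding s_def by (rule filterlim_compose[OF filterlim_real_sequentially filterlim_subseq[OF r]])
  have sq: "(\<lambda>k. mu (s k)) \<longlonglongrightarrow> q" using q unfolding s_def o_def .
  have "(mu \<longlongrightarrow> q) at_top"
  proof (rule ccontr)
    assume "\<not> (mu \<longlongrightarrow> q) at_top"
    then obtain \<epsilon> where \<epsilon>: "\<epsilon> > 0" and "\<not> (\<forall>\<^sub>F t in at_top. dist (mu t) q < \<epsilon>)"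
      unfolding tendsto_iff by blast
    then have "\<forall>k::nat. \<exists>t. t \<ge> real k \<and> dist (mu t) q \<ge> \<epsilon>"
      unfolding eventually_at_top_linorder by (meson not_le)
    then obtain T where T: "\<And>k. T k \<ge> real k" "\<And>k. dist (mu (T k)) q \<ge> \<epsilon>" by metis
    have T_lim: "filterlim T at_top sequentially"
      by (rule filterlim_at_top_mono[OF filterlim_real_sequentially]) (use T(1) in auto)
    obtain q' r' where r': "strict_mono r'" and q': "((\<lambda>k. mu (T k)) \<circ> r') \<longlonglongrightarrow> q'"
      using limit_point[of T] T(1) by (meson of_nat_0_le_iff order_trans)
    have "q = q'"
      using unique[OF s sq filterlim_compose[OF T_lim filterlim_subseq[OF r']]] q' by (simp add: o_def)
    moreover have "\<epsilon> \<le> dist q' q"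
      using T(2) by (intro tendsto_lowerbound[OF tendsto_dist[OF q' tendsto_const]]) auto
    ultimately show False using \<epsilon> by simp
  qed
  then show thesis using that s sq by blast
qed

definition bounded_lipschitz_on :: "'a::metric_space set \<Rightarrow> ('a \<Rightarrow> 'b::real_normed_vector) \<Rightarrow> bool" where
  "bounded_lipschitz_on A f \<longleftrightarrow> (\<exists>C. C-lipschitz_on A f) \<and> (\<exists>B\<ge>0. \<forall>x\<in>A. norm (f x) \<le> B)"

lemma bounded_lipschitz_onI:
  "C-lipschitz_on A f \<Longrightarrow> (\<And>x. x \<in> A \<Longrightarrow> norm (f x) \<le> B) \<Longrightarrow> 0 \<le> B \<Longrightarrow> bounded_lipschitz_on A f"
  unfolding bounded_lipschitz_on_def by blast

lemma bounded_lipschitz_onE: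
  assumes "bounded_lipschitz_on A f"
  obtains C B where "C-lipschitz_on A f" "0 \<le> B" "\<And>x. x \<in> A \<Longrightarrow> norm (f x) \<le> B"
  using assms unfolding bounded_lipschitz_on_def by blast

lemma bounded_lipschitz_on_const: "bounded_lipschitz_on A (\<lambda>x. c)"
  by (rule bounded_lipschitz_onI[where B = "norm c", OF lipschitz_on_constant]) auto

lemma bounded_lipschitz_on_add:
  assumes "bounded_lipschitz_on A f" "bounded_lipschitz_on A g"
  shows "bounded_lipschitz_on A (\<lambda>x. f x + g x)"
proof -
  obtain Cf Bf Cg Bg where f: "Cf-lipschitz_on A f" "0 \<le> Bf" "\<And>x. x \<in> A \<Longrightarrow> norm (f x) \<le> Bf"
    and g: "Cg-lipschitz_on A g" "0 \<le> Bg" "\<And>x. x \<in> A \<Longrightarrow> norm (g x) \<le> Bg"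
    using assms by (metis bounded_lipschitz_onE)
  show ?thesis
  proof (rule bounded_lipschitz_onI[OF lipschitz_on_add[OF f(1) g(1)]])
    show "norm (f x + g x) \<le> Bf + Bg" if "x \<in> A" for x
      using f(3)[OF that] g(3)[OF that] norm_triangle_ineq[of "f x" "g x"] by linarith
  qed (use f g in simp)
qed

lemma bounded_lipschitz_on_uminus: "bounded_lipschitz_on A f \<Longrightarrow> bounded_lipschitz_on A (\<lambda>x. - f x)"
  unfolding bounded_lipschitz_on_def by auto

lemma bounded_lipschitz_on_diff:
  "bounded_lipschitz_on A f \<Longrightarrow> bounded_lipschitz_on A g \<Longrightarrow> bounded_lipschitz_on A (\<lambda>x. f x - g x)"
  using bounded_lipschitz_on_add[of A f "\<lambda>x. - g x"] bounded_lipschitz_on_uminus[of A g] by simp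

lemma (in bounded_bilinear) bounded_lipschitz_on:
  assumes "bounded_lipschitz_on A f" "bounded_lipschitz_on A g"
  shows "bounded_lipschitz_on A (\<lambda>x. prod (f x) (g x))"
proof -
  obtain Cf Bf Cg Bg where f: "Cf-lipschitz_on A f" "0 \<le> Bf" "\<And>x. x \<in> A \<Longrightarrow> norm (f x) \<le> Bf"
    and g: "Cg-lipschitz_on A g" "0 \<le> Bg" "\<And>x. x \<in> A \<Longrightarrow> norm (g x) \<le> Bg"
    using assms by (metis bounded_lipschitz_onE)
  obtain K where K: "\<And>a b. norm (prod a b) \<le> norm a * norm b * K" "K > 0"
    using pos_bounded by blast
  have C: "0 \<le> Cf" "0 \<le> Cg" using f(1) g(1) lipschitz_on_nonneg by auto
  show ?thesis
  proof (rule bounded_lipschitz_onI)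
    show "(K * (Cf * Bg + Bf * Cg))-lipschitz_on A (\<lambda>x. prod (f x) (g x))"
    proof (rule lipschitz_onI)
      fix x y assume xy: "x \<in> A" "y \<in> A"
      have "prod (f x) (g x) - prod (f y) (g y) = prod (f x - f y) (g x) + prod (f y) (g x - g y)"
        by (simp add: diff_left diff_right)
      then have "norm (prod (f x) (g x) - prod (f y) (g y))
          \<le> norm (prod (f x - f y) (g x)) + norm (prod (f y) (g x - g y))"
        by (simp only: norm_triangle_ineq)
      also have "\<dots> \<le> norm (f x - f y) * norm (g x) * K + norm (f y) * norm (g x - g y) * K"
        by (intro add_mono K(1))
      also have "\<dots> \<le> (Cf * dist x y) * Bg * K + Bf * (Cg * dist x y) * K"
        using lipschitz_onD[OF f(1) xy] lipschitz_onD[OF g(1) xy] f(3)[OF xy(2)] g(3)[OF xy(1)]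
          K(2) f(2) C
        by (intro add_mono mult_right_mono mult_mono) (auto simp: dist_norm)
      finally show "dist (prod (f x) (g x)) (prod (f y) (g y)) \<le> K * (Cf * Bg + Bf * Cg) * dist x y"
        by (simp add: dist_norm algebra_simps)
    qed (use K(2) C f(2) g(2) in simp)
    show "norm (prod (f x) (g x)) \<le> Bf * Bg * K" if "x \<in> A" for x
    proof -
      have "norm (f x) * norm (g x) \<le> Bf * Bg"
        using f(2) f(3)[OF that] g(3)[OF that] by (intro mult_mono) auto
      then show ?thesis
        using K(1)[of "f x" "g x"] mult_right_mono[OF _ less_imp_le[OF K(2)]] by (meson order_trans)
    qed
  qed (use K(2) f(2) g(2) in simp)
qed

lemmas bounded_lipschitz_on_scaleR = bounded_bilinear.bounded_lipschitz_on[OF bounded_bilinear_scaleR]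
lemmas bounded_lipschitz_on_mult = bounded_bilinear.bounded_lipschitz_on[OF bounded_bilinear_mult]
lemmas bounded_lipschitz_on_inner = bounded_bilinear.bounded_lipschitz_on[OF bounded_bilinear_inner]

lemma bounded_linear_bounded_lipschitz_on:
  assumes "bounded_linear f" "bounded A"
  shows "bounded_lipschitz_on A f"
proof -
  obtain C where C: "C-lipschitz_on A f" using bounded_linear.lipschitz_boundE[OF assms(1)] by blast
  obtain K where K: "\<And>x. norm (f x) \<le> norm x * K" "K > 0"
    using bounded_linear.pos_bounded[OF assms(1)] by blast
  obtain r where r: "\<And>x. x \<in> A \<Longrightarrow> norm x \<le> r" "r > 0" using assms(2) by (auto simp: bounded_pos)
  show ?thesis
  proof (rule bounded_lipschitz_onI[OF C])
    show "norm (f x) \<le> r * K" if "x \<in> A" for x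
      using K(1)[of x] mult_right_mono[OF r(1)[OF that] less_imp_le[OF K(2)]] by linarith
  qed (use K r in simp)
qed

lemma bounded_lipschitz_on_id: "bounded A \<Longrightarrow> bounded_lipschitz_on A (\<lambda>x. x)"
  using bounded_linear_bounded_lipschitz_on[OF bounded_linear_ident] .

lemma locally_lipschitz_if_bounded_lipschitz_on:
  fixes f :: "'a::real_normed_vector \<Rightarrow> 'b::real_normed_vector"
  assumes "\<And>A. bounded A \<Longrightarrow> bounded_lipschitz_on A f"
  shows "locally_lipschitz f"
  unfolding locally_lipschitz_def
proof
  fix x :: 'a
  obtain C where "C-lipschitz_on (ball x 1) f"
    using assms[OF bounded_ball[of x 1]] by (auto simp: bounded_lipschitz_on_def)
  then show "\<exists>e>0. \<exists>C. C-lipschitz_on (ball x e) f" by (intro exI[of _ 1]) auto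
qed

lemma isCont_if_bounded_lipschitz_on:
  fixes f :: "'a::real_normed_vector \<Rightarrow> 'b::real_normed_vector"
  assumes "\<And>A. bounded A \<Longrightarrow> bounded_lipschitz_on A f"
  shows "isCont f x"
proof -
  obtain C where "C-lipschitz_on (ball x 1) f"
    using assms[OF bounded_ball[of x 1]] by (auto simp: bounded_lipschitz_on_def)
  then show ?thesis
    using continuous_on_interior[OF lipschitz_on_continuous_on] by fastforce
qed

section \<open>Global solutions for bounded, globally Lipschitz vector fields\<close>

locale bounded_lipschitz_field =
  fixes G :: "'a::euclidean_space \<Rightarrow> 'a" and C M :: real
  assumes lipschitz: "\<And>x y. norm (G x - G y) \<le> C * norm (x - y)"
    and bounded: "\<And>x. norm (G x) \<le> M"
    and C_nonneg: "0 \<le> C"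
begin

lemma M_nonneg: "0 \<le> M"
  using bounded[of 0] norm_ge_zero order_trans by blast

lemma continuous_on_G: "continuous_on A G"
proof -
  have "C-lipschitz_on A G" by (rule lipschitz_onI) (auto simp: dist_norm lipschitz C_nonneg)
  then show ?thesis by (rule lipschitz_on_continuous_on)
qed

primrec picard_iterate :: "'a \<Rightarrow> nat \<Rightarrow> real \<Rightarrow> 'a" where
  "picard_iterate x0 0 = (\<lambda>t. x0)"
| "picard_iterate x0 (Suc m) = (\<lambda>t. x0 + integral {0..t} (\<lambda>s. G (picard_iterate x0 m s)))"

lemma picard_iterate_Suc_diff:
  "picard_iterate x0 (Suc (Suc m)) t - picard_iterate x0 (Suc m) t
    = integral {0..t} (\<lambda>s. G (picard_iterate x0 (Suc m) s)) - integral {0..t} (\<lambda>s. G (picard_iterate x0 m s))"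
  by (simp only: picard_iterate.simps(2) add_diff_cancel_left)

lemma continuous_on_picard_iterate: "continuous_on {0..b} (picard_iterate x0 m)"
proof (induction m)
  case 0
  then show ?case by simp
next
  case (Suc m)
  have "continuous_on {0..b} (\<lambda>s. G (picard_iterate x0 m s))"
    using continuous_on_compose2[OF continuous_on_G Suc] by auto
  from integral_has_vector_derivative[OF this]
  have "continuous_on {0..b} (\<lambda>t. integral {0..t} (\<lambda>s. G (picard_iterate x0 m s)))"
    unfolding continuous_on_eq_continuous_within using has_vector_derivative_continuous by blast
  then show ?case by (simp add: continuous_intros)
qed

lemma continuous_on_G_comp:
  "continuous_on {0..b} x \<Longrightarrow> continuous_on {0..b} (\<lambda>s. G (x s))"
  using continuous_on_compose2[OF continuous_on_G] by auto

lemma integrable_G_picard_iterate: "(\<lambda>s. G (picard_iterate x0 m s)) integrable_on {0..b}"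
  by (rule integrable_continuous_real[OF continuous_on_G_comp[OF continuous_on_picard_iterate]])

definition picard_bound :: "nat \<Rightarrow> real \<Rightarrow> real" where
  "picard_bound m t = M * C ^ m * t ^ Suc m / fact (Suc m)"

lemma picard_bound_has_integral:
  assumes "0 \<le> t"
  shows "((\<lambda>s. C * picard_bound m s) has_integral picard_bound (Suc m) t) {0..t}"
proof -
  have "((\<lambda>s. C * picard_bound m s) has_integral (picard_bound (Suc m) t - picard_bound (Suc m) 0)) {0..t}"
  proof (rule fundamental_theorem_of_calculus[OF assms])
    fix s :: real
    have "(picard_bound (Suc m) has_real_derivative
        M * C ^ Suc m * (real (Suc (Suc m)) * s ^ Suc m) / fact (Suc (Suc m))) (at s)"
      unfolding picard_bound_def by (intro derivative_eq_intros) auto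
    moreover have "M * C ^ Suc m * (real (Suc (Suc m)) * s ^ Suc m) / fact (Suc (Suc m))
        = C * picard_bound m s"
    proof -
      have "M * C ^ Suc m * (real (Suc (Suc m)) * s ^ Suc m) / fact (Suc (Suc m))
          = (real (Suc (Suc m)) * (M * C ^ Suc m * s ^ Suc m)) / (real (Suc (Suc m)) * fact (Suc m))"
        by (simp only: fact_Suc[of "Suc m"] of_nat_mult ac_simps)
      also have "\<dots> = M * C ^ Suc m * s ^ Suc m / fact (Suc m)"
        by (rule mult_divide_mult_cancel_left) simp
      finally show ?thesis unfolding picard_bound_def by (simp add: ac_simps)
    qed
    ultimately show "(picard_bound (Suc m) has_vector_derivative C * picard_bound m s) (at s within {0..t})"
      by (simp add: has_real_derivative_iff_has_vector_derivative[symmetric] has_field_derivative_at_within)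
  qed
  then show ?thesis by (simp add: picard_bound_def)
qed

lemma picard_iterate_step_le:
  "0 \<le> t \<Longrightarrow> norm (picard_iterate x0 (Suc m) t - picard_iterate x0 m t) \<le> picard_bound m t"
proof (induction m arbitrary: t)
  case 0
  then show ?case
    using mult_right_mono[OF bounded[of x0] \<open>0 \<le> t\<close>] by (simp add: picard_bound_def mult.commute)
next
  case (Suc m)
  let ?X = "picard_iterate x0"
  have "?X (Suc (Suc m)) t - ?X (Suc m) t = integral {0..t} (\<lambda>s. G (?X (Suc m) s) - G (?X m s))"
    unfolding picard_iterate_Suc_diff
    by (rule integral_diff[OF integrable_G_picard_iterate integrable_G_picard_iterate, symmetric])
  also have "norm \<dots> \<le> integral {0..t} (\<lambda>s. C * picard_bound m s)"
  proof (rule integral_norm_bound_integral)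
    show "(\<lambda>s. G (?X (Suc m) s) - G (?X m s)) integrable_on {0..t}"
      by (intro integrable_diff integrable_G_picard_iterate)
    show "(\<lambda>s. C * picard_bound m s) integrable_on {0..t}"
      using picard_bound_has_integral[OF Suc.prems] by blast
    fix s assume s: "s \<in> {0..t}"
    have "norm (G (?X (Suc m) s) - G (?X m s)) \<le> C * norm (?X (Suc m) s - ?X m s)"
      by (rule lipschitz)
    also have "\<dots> \<le> C * picard_bound m s" using Suc.IH[of s] s C_nonneg by (auto intro: mult_left_mono)
    finally show "norm (G (?X (Suc m) s) - G (?X m s)) \<le> C * picard_bound m s" .
  qed
  also have "\<dots> = picard_bound (Suc m) t"
    using picard_bound_has_integral[OF Suc.prems] by (rule integral_unique)
  finally show ?case .
qed

lemma summable_picard_bound: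
  assumes "0 \<le> b"
  shows "summable (\<lambda>m. picard_bound m b)"
proof (rule summable_comparison_test')
  show "summable (\<lambda>m. M * b * (inverse (fact m) * (C * b) ^ m))"
    by (intro summable_mult summable_exp)
  fix m :: nat
  have "fact m \<le> (fact (Suc m) :: real)" by (rule fact_mono) simp
  then have "M * b * (C * b) ^ m / fact (Suc m) \<le> M * b * (C * b) ^ m / fact m"
    using M_nonneg assms C_nonneg by (intro divide_left_mono) auto
  then show "norm (picard_bound m b) \<le> M * b * (inverse (fact m) * (C * b) ^ m)"
    unfolding picard_bound_def using M_nonneg assms C_nonneg by (simp add: power_mult_distrib field_simps)
qed

lemma picard_iterate_uniform_limit:
  obtains x where "\<And>b. 0 \<le> b \<Longrightarrow> uniform_limit {0..b} (picard_iterate x0) x sequentially"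
proof -
  define d where "d m t = picard_iterate x0 (Suc m) t - picard_iterate x0 m t" for m t
  have telescope: "picard_iterate x0 m t = x0 + (\<Sum>i<m. d i t)" for m t
    unfolding d_def using sum_lessThan_telescope[of "\<lambda>i. picard_iterate x0 i t" m] by simp
  have "uniform_limit {0..b} (\<lambda>m t. \<Sum>i<m. d i t) (\<lambda>t. \<Sum>i. d i t) sequentially" if b: "0 \<le> b" for b
  proof (rule Weierstrass_m_test[OF _ summable_picard_bound[OF b]])
    fix m t assume t: "t \<in> {0..b}"
    have "norm (d m t) \<le> picard_bound m t" unfolding d_def using picard_iterate_step_le t by simp
    also have "\<dots> \<le> picard_bound m b" unfolding picard_bound_def using t M_nonneg C_nonneg
      by (intro divide_right_mono mult_left_mono power_mono) auto
    finally show "norm (d m t) \<le> picard_bound m b" .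
  qed
  then have "uniform_limit {0..b} (picard_iterate x0) (\<lambda>t. x0 + (\<Sum>i. d i t)) sequentially"
    if "0 \<le> b" for b
    unfolding telescope[abs_def] using that by (intro uniform_limit_intros) auto
  then show thesis using that by blast
qed

lemma uniform_limit_G_comp:
  assumes "uniform_limit A X x F"
  shows "uniform_limit A (\<lambda>m s. G (X m s)) (\<lambda>s. G (x s)) F"
  unfolding uniform_limit_iff
proof (intro allI impI)
  fix e :: real assume "e > 0"
  then have "\<forall>\<^sub>F m in F. \<forall>t\<in>A. dist (X m t) (x t) < e / (C + 1)"
    using assms C_nonneg unfolding uniform_limit_iff by (auto simp: add_nonneg_pos)
  then show "\<forall>\<^sub>F m in F. \<forall>t\<in>A. dist (G (X m t)) (G (x t)) < e"
  proof (rule eventually_mono, intro ballI)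
    fix m t assume close: "\<forall>t\<in>A. dist (X m t) (x t) < e / (C + 1)" and "t \<in> A"
    have "dist (G (X m t)) (G (x t)) \<le> C * dist (X m t) (x t)"
      using lipschitz by (simp add: dist_norm)
    also have "\<dots> \<le> C * (e / (C + 1))"
      using close \<open>t \<in> A\<close> C_nonneg by (intro mult_left_mono) (auto intro: less_imp_le)
    also have "\<dots> < e" using C_nonneg \<open>e > 0\<close> by (simp add: field_simps)
    finally show "dist (G (X m t)) (G (x t)) < e" .
  qed
qed

lemma flow_exists:
  obtains x where "x 0 = x0" "\<And>t. t \<ge> 0 \<Longrightarrow> (x has_vector_derivative G (x t)) (at t within {0..})"
proof -
  let ?X = "picard_iterate x0"
  obtain x where lim: "\<And>b. 0 \<le> b \<Longrightarrow> uniform_limit {0..b} ?X x sequentially"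
    using picard_iterate_uniform_limit by blast
  have cont_Gx: "continuous_on {0..b} (\<lambda>s. G (x s))" if "0 \<le> b" for b
    using uniform_limit_theorem[OF _ lim[OF that]] continuous_on_picard_iterate
    by (intro continuous_on_G_comp) auto
  have lim_G: "uniform_limit {0..b} (\<lambda>m s. G (?X m s)) (\<lambda>s. G (x s)) sequentially"
    if "0 \<le> b" for b
    by (rule uniform_limit_G_comp[OF lim[OF that]])
  have integral_eq: "x t = x0 + integral {0..t} (\<lambda>s. G (x s))" if t: "0 \<le> t" for t
  proof -
    obtain I J where I: "\<And>m. ((\<lambda>s. G (?X m s)) has_integral I m) {0..t}"
      and J: "((\<lambda>s. G (x s)) has_integral J) {0..t}" and IJ: "I \<longlonglongrightarrow> J"
      by (rule uniform_limit_integral[OF lim_G[OF t] continuous_on_G_comp[OF continuous_on_picard_iterate]])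
         auto
    have "?X (Suc m) t = x0 + I m" for m using integral_unique[OF I[of m]] by simp
    then have "(\<lambda>m. ?X (Suc m) t) \<longlonglongrightarrow> x0 + J" using IJ by (simp add: tendsto_add_const_iff)
    moreover have "(\<lambda>m. ?X (Suc m) t) \<longlonglongrightarrow> x t"
      using LIMSEQ_Suc[OF tendsto_uniform_limitI[OF lim[OF t], of t]] t by simp
    ultimately have "x t = x0 + J" by (rule LIMSEQ_unique[rotated])
    then show ?thesis using J by (simp add: integral_unique)
  qed
  show thesis
  proof
    show "x 0 = x0" using integral_eq[of 0] by simp
    show "(x has_vector_derivative G (x t)) (at t within {0..})" if "t \<ge> 0" for t
      by (rule has_vector_derivative_integral_equation[OF cont_Gx integral_eq that])
  qed
qed

end

definition ball_cutoff :: "real \<Rightarrow> 'a::real_normed_vector \<Rightarrow> real" where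
  "ball_cutoff r x = max 0 (min 1 (r - norm x))"

lemma ball_cutoff_bounds: "0 \<le> ball_cutoff r x" "ball_cutoff r x \<le> 1"
  unfolding ball_cutoff_def by auto

lemma ball_cutoff_lipschitz: "\<bar>ball_cutoff r x - ball_cutoff r y\<bar> \<le> norm (x - y)"
  using norm_triangle_ineq3[of x y] unfolding ball_cutoff_def by (simp add: abs_le_iff max_def min_def)

lemma ball_cutoff_eq_0: "r < norm x \<Longrightarrow> ball_cutoff r x = 0"
  unfolding ball_cutoff_def by auto

lemma ball_cutoff_eq_1: "norm x \<le> r - 1 \<Longrightarrow> ball_cutoff r x = 1"
  unfolding ball_cutoff_def by auto

lemma cutoff_bounded_lipschitz_field:
  fixes G :: "'a::euclidean_space \<Rightarrow> 'a"
  assumes lip: "C-lipschitz_on (cball 0 r) G"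
    and bound: "\<And>x. x \<in> cball 0 r \<Longrightarrow> norm (G x) \<le> M" and "0 \<le> M"
  shows "bounded_lipschitz_field (\<lambda>x. ball_cutoff r x *\<^sub>R G x) (C + M) M"
proof -
  let ?\<phi> = "ball_cutoff r"
  have "0 \<le> C" using lip lipschitz_on_nonneg by blast
  have lip_inside: "norm (?\<phi> x *\<^sub>R G x - ?\<phi> y *\<^sub>R G y) \<le> (C + M) * norm (x - y)"
    if "norm x \<le> r" for x y
  proof (cases "norm y \<le> r")
    case True
    have "?\<phi> x *\<^sub>R G x - ?\<phi> y *\<^sub>R G y = (?\<phi> x - ?\<phi> y) *\<^sub>R G x + ?\<phi> y *\<^sub>R (G x - G y)"
      by (simp add: algebra_simps)
    then have "norm (?\<phi> x *\<^sub>R G x - ?\<phi> y *\<^sub>R G y) \<le> \<bar>?\<phi> x - ?\<phi> y\<bar> * norm (G x) + ?\<phi> y * norm (G x - G y)"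
      using ball_cutoff_bounds[of r y] by (metis abs_of_nonneg norm_scaleR norm_triangle_ineq)
    also have "\<dots> \<le> norm (x - y) * M + 1 * (C * norm (x - y))"
      using ball_cutoff_lipschitz[of r x y] bound[of x] that ball_cutoff_bounds[of r y]
        lipschitz_on_normD[OF lip, of x y] True
      by (intro add_mono mult_mono) auto
    finally show ?thesis by (simp add: algebra_simps)
  next
    case False
    then have "norm (?\<phi> x *\<^sub>R G x - ?\<phi> y *\<^sub>R G y) = \<bar>?\<phi> x - ?\<phi> y\<bar> * norm (G x)"
      using ball_cutoff_eq_0[of r y] ball_cutoff_bounds[of r x] by simp
    also have "\<dots> \<le> norm (x - y) * M"
      using ball_cutoff_lipschitz[of r x y] bound[of x] that by (intro mult_mono) auto
    also have "\<dots> \<le> (C + M) * norm (x - y)" using \<open>0 \<le> C\<close> by (simp add: algebra_simps)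
    finally show ?thesis .
  qed
  show ?thesis
  proof unfold_locales
    fix x y :: 'a
    show "norm (?\<phi> x *\<^sub>R G x - ?\<phi> y *\<^sub>R G y) \<le> (C + M) * norm (x - y)"
    proof (cases "norm x \<le> r \<or> norm y \<le> r")
      case True
      then show ?thesis using lip_inside[of x y] lip_inside[of y x] by (metis norm_minus_commute)
    next
      case False
      then show ?thesis using ball_cutoff_eq_0[of r x] ball_cutoff_eq_0[of r y] \<open>0 \<le> C\<close> \<open>0 \<le> M\<close> by simp
    qed
    show "norm (?\<phi> x *\<^sub>R G x) \<le> M"
    proof (cases "norm x \<le> r")
      case True
      then show ?thesis
        using ball_cutoff_bounds[of r x] bound[of x] mult_mono[of "?\<phi> x" 1 "norm (G x)" M] by simp
    qed (use ball_cutoff_eq_0[of r x] \<open>0 \<le> M\<close> in simp)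
  qed (use \<open>0 \<le> C\<close> \<open>0 \<le> M\<close> in simp)
qed

section \<open>Gradient flows of functions with locally Lipschitz gradient\<close>

locale gradient_system =
  fixes f :: "'a::euclidean_space \<Rightarrow> real" and G :: "'a \<Rightarrow> 'a"
  assumes has_gradient: "\<And>x. GDERIV f x :> G x"
    and bounded_lipschitz_gradient: "\<And>A. bounded A \<Longrightarrow> bounded_lipschitz_on A G"
begin

lemma isCont_f: "isCont f x"
  using has_gradient[of x] unfolding gderiv_def by (rule has_derivative_continuous)

lemma isCont_G: "isCont G x"
  by (rule isCont_if_bounded_lipschitz_on[OF bounded_lipschitz_gradient])

lemma grad_flow_iff:
  "grad_flow f mu mu0 \<longleftrightarrow> mu 0 = mu0 \<and> (\<forall>t\<ge>0. (mu has_vector_derivative - G (mu t)) (at t within {0..}))"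
  unfolding grad_flow_def using GDERIV_unique has_gradient by blast

lemma grad_flow_has_vector_derivative:
  "grad_flow f mu mu0 \<Longrightarrow> t \<ge> 0 \<Longrightarrow> (mu has_vector_derivative - G (mu t)) (at t within {0..})"
  unfolding grad_flow_iff by blast

lemma grad_flow_energy_has_derivative:
  "grad_flow f mu mu0 \<Longrightarrow> t \<ge> 0 \<Longrightarrow>
    ((\<lambda>t. f (mu t)) has_real_derivative - (G (mu t) \<bullet> G (mu t))) (at t within {0..})"
  using GDERIV_chain_vector[OF has_gradient grad_flow_has_vector_derivative] by simp

lemma grad_flow_energy_decreasing:
  assumes "grad_flow f mu mu0" "0 \<le> s" "s \<le> t"
  shows "f (mu t) \<le> f (mu s)"
  by (rule DERIV_within_nonpos_imp_decreasing[OF assms(3) _ grad_flow_energy_has_derivative[OF assms(1)]])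
     (use assms(2) in auto)

lemma grad_flow_exists:
  assumes "bounded {x. f x \<le> f mu0}"
  obtains mu where "grad_flow f mu mu0"
proof -
  obtain \<rho> where \<rho>: "\<And>x. f x \<le> f mu0 \<Longrightarrow> norm x < \<rho>"
    using assms by (meson bounded_pos_less mem_Collect_eq)
  obtain C M where C: "C-lipschitz_on (cball 0 (\<rho> + 1)) G"
    and M: "0 \<le> M" "\<And>x. x \<in> cball 0 (\<rho> + 1) \<Longrightarrow> norm (G x) \<le> M"
    using bounded_lipschitz_gradient[OF bounded_cball] by (metis bounded_lipschitz_onE)
  define \<phi> :: "'a \<Rightarrow> real" where "\<phi> = ball_cutoff (\<rho> + 1)"
  have cutoff: "bounded_lipschitz_field (\<lambda>x. \<phi> x *\<^sub>R G x) (C + M) M"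
    unfolding \<phi>_def by (rule cutoff_bounded_lipschitz_field[OF C M(2) M(1)])
  interpret cutoff: bounded_lipschitz_field "\<lambda>x. - (\<phi> x *\<^sub>R G x)" "C + M" M
    using bounded_lipschitz_field.lipschitz[OF cutoff] bounded_lipschitz_field.bounded[OF cutoff]
      bounded_lipschitz_field.C_nonneg[OF cutoff]
    by unfold_locales (simp_all add: norm_minus_commute)
  obtain mu where mu0: "mu 0 = mu0"
    and deriv: "\<And>t. t \<ge> 0 \<Longrightarrow> (mu has_vector_derivative - (\<phi> (mu t) *\<^sub>R G (mu t))) (at t within {0..})"
    using cutoff.flow_exists by blast
  have "f (mu t) \<le> f mu0" if "t \<ge> 0" for t
  proof -
    have "f (mu t) \<le> f (mu 0)"
    proof (rule DERIV_within_nonpos_imp_decreasing[OF that])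
      fix s :: real assume "0 \<le> s"
      show "((\<lambda>t. f (mu t)) has_real_derivative - (\<phi> (mu s) *\<^sub>R G (mu s)) \<bullet> G (mu s)) (at s within {0..})"
        by (rule GDERIV_chain_vector[OF has_gradient deriv[OF \<open>0 \<le> s\<close>]])
      show "- (\<phi> (mu s) *\<^sub>R G (mu s)) \<bullet> G (mu s) \<le> 0"
        using ball_cutoff_bounds(1)[of "\<rho> + 1" "mu s"] by (simp add: \<phi>_def)
    qed auto
    then show ?thesis using mu0 by simp
  qed
  then have "\<phi> (mu t) = 1" if "t \<ge> 0" for t
    using \<rho> that unfolding \<phi>_def by (intro ball_cutoff_eq_1) (simp add: less_imp_le)
  then have "grad_flow f mu mu0"
    unfolding grad_flow_iff using mu0 deriv by simp
  then show thesis by (rule that)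
qed

lemma grad_flow_bounded:
  assumes "bounded {x. f x \<le> f mu0}" "grad_flow f mu mu0"
  shows "bounded (mu ` {0..})"
proof (rule bounded_subset[OF assms(1)])
  show "mu ` {0..} \<subseteq> {x. f x \<le> f mu0}"
  proof (rule image_subsetI)
    fix t :: real assume "t \<in> {0..}"
    then show "mu t \<in> {x. f x \<le> f mu0}"
      using grad_flow_energy_decreasing[OF assms(2), of 0 t] assms(2) by (simp add: grad_flow_def)
  qed
qed

lemma grad_flow_energy_tendsto:
  assumes gf: "grad_flow f mu mu0" and lower: "\<And>x. m \<le> f x"
  obtains l where "((\<lambda>t. f (mu t)) \<longlongrightarrow> l) at_top" "\<And>t. t \<ge> 0 \<Longrightarrow> l \<le> f (mu t)"
proof -
  define l where "l = (INF t\<in>{0..}. f (mu t))"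
  have bdd: "bdd_below ((\<lambda>t. f (mu t)) ` {0..})" using lower by (intro bdd_belowI2) auto
  have lower_l: "l \<le> f (mu t)" if "t \<ge> 0" for t
    unfolding l_def using bdd that by (intro cINF_lower) auto
  have "((\<lambda>t. f (mu t)) \<longlongrightarrow> l) at_top"
  proof (rule decreasing_tendsto)
    show "\<forall>\<^sub>F t in at_top. l \<le> f (mu t)"
      by (rule eventually_mono[OF eventually_ge_at_top[of 0] lower_l])
    fix y assume "l < y"
    then obtain t0 where "t0 \<ge> 0" "f (mu t0) < y"
      unfolding l_def using cINF_less_iff[OF _ bdd] by auto
    then show "\<forall>\<^sub>F t in at_top. f (mu t) < y"
      using grad_flow_energy_decreasing[OF gf \<open>t0 \<ge> 0\<close>]
      by (intro eventually_mono[OF eventually_ge_at_top[of t0]]) (auto intro: le_less_trans)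
  qed
  then show thesis using that lower_l by blast
qed

text \<open>The gradient cannot change quickly along a trajectory of bounded speed, so once it is large
  it stays large for the time \<open>h\<close>.\<close>
lemma grad_flow_energy_drop:
  assumes gf: "grad_flow f mu mu0"
    and inside: "\<And>t. t \<ge> 0 \<Longrightarrow> mu t \<in> A" and lip: "C-lipschitz_on A G"
    and bound: "\<And>x. x \<in> A \<Longrightarrow> norm (G x) \<le> M" "0 \<le> M"
    and "0 \<le> t" "0 < \<epsilon>" "\<epsilon> \<le> norm (G (mu t))"
  defines "h \<equiv> \<epsilon> / (2 * (C * M + 1))"
  shows "f (mu (t + h)) \<le> f (mu t) - \<epsilon>\<^sup>2 / 4 * h"
proof -
  have "0 \<le> C" using lip lipschitz_on_nonneg by blast
  then have "0 < h" unfolding h_def using \<open>0 < \<epsilon>\<close> bound(2) by (simp add: add_nonneg_pos)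
  have "C * M * h = \<epsilon> / 2 * (C * M / (C * M + 1))"
    unfolding h_def by (simp add: field_simps)
  also have "\<dots> \<le> \<epsilon> / 2 * 1"
    using \<open>0 \<le> C\<close> bound(2) \<open>0 < \<epsilon>\<close> by (intro mult_left_mono) (auto simp: divide_le_eq_1 add_nonneg_pos)
  finally have "C * M * h \<le> \<epsilon> / 2" by simp
  have large: "\<epsilon>\<^sup>2 / 4 \<le> G (mu s) \<bullet> G (mu s)" if s: "t \<le> s" "s \<le> t + h" for s
  proof -
    have "norm (mu s - mu t) \<le> M * \<bar>s - t\<bar>"
      using grad_flow_has_vector_derivative[OF gf] inside bound \<open>0 \<le> t\<close> s
      by (intro has_vector_derivative_bound_imp_dist_le[where T = "{0..}" and f' = "\<lambda>t. - G (mu t)"]) auto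
    also have "\<dots> \<le> M * h" using s bound(2) by (intro mult_left_mono) auto
    finally have "norm (mu s - mu t) \<le> M * h" .
    have "norm (G (mu s) - G (mu t)) \<le> C * norm (mu s - mu t)"
      by (rule lipschitz_on_normD[OF lip]) (use inside \<open>0 \<le> t\<close> s in auto)
    also have "\<dots> \<le> C * (M * h)" using \<open>norm (mu s - mu t) \<le> M * h\<close> \<open>0 \<le> C\<close> by (rule mult_left_mono)
    finally have "norm (G (mu s) - G (mu t)) \<le> C * (M * h)" .
    then have "\<epsilon> / 2 \<le> norm (G (mu s))"
      using \<open>C * M * h \<le> \<epsilon> / 2\<close> \<open>\<epsilon> \<le> norm (G (mu t))\<close> norm_triangle_sub[of "G (mu t)" "G (mu s)"]
      by (simp add: norm_minus_commute mult.assoc)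
    then have "(\<epsilon> / 2)\<^sup>2 \<le> (norm (G (mu s)))\<^sup>2" using \<open>0 < \<epsilon>\<close> by (intro power_mono) auto
    then show ?thesis by (simp add: power2_norm_eq_inner power_divide)
  qed
  have "f (mu (t + h)) + \<epsilon>\<^sup>2 / 4 * (t + h) \<le> f (mu t) + \<epsilon>\<^sup>2 / 4 * t"
  proof (rule DERIV_within_nonpos_imp_decreasing[where f = "\<lambda>s. f (mu s) + \<epsilon>\<^sup>2 / 4 * s"])
    fix s assume s: "t \<le> s" "s \<le> t + h"
    show "((\<lambda>s. f (mu s) + \<epsilon>\<^sup>2 / 4 * s) has_real_derivative - (G (mu s) \<bullet> G (mu s)) + \<epsilon>\<^sup>2 / 4)
        (at s within {0..})"
      using grad_flow_energy_has_derivative[OF gf, of s] \<open>0 \<le> t\<close> s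
      by (auto intro!: derivative_eq_intros)
    show "- (G (mu s) \<bullet> G (mu s)) + \<epsilon>\<^sup>2 / 4 \<le> 0" using large[OF s] by simp
  qed (use \<open>0 \<le> t\<close> \<open>0 < h\<close> in auto)
  then show ?thesis by (simp add: distrib_left)
qed

lemma grad_flow_gradient_tendsto_zero:
  assumes gf: "grad_flow f mu mu0" and bdd: "bounded (mu ` {0..})" and lower: "\<And>x. m \<le> f x"
  shows "((\<lambda>t. G (mu t)) \<longlongrightarrow> 0) at_top"
proof (rule ccontr)
  assume "\<not> ((\<lambda>t. G (mu t)) \<longlongrightarrow> 0) at_top"
  then obtain \<epsilon> where "\<epsilon> > 0" and "\<not> (\<forall>\<^sub>F t in at_top. dist (G (mu t)) 0 < \<epsilon>)"
    unfolding tendsto_iff by blast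
  then have large: "\<exists>t\<ge>T. \<epsilon> \<le> norm (G (mu t))" for T
    unfolding eventually_at_top_linorder by (auto simp: not_less)
  obtain C M where lip: "C-lipschitz_on (mu ` {0..}) G"
    and M: "0 \<le> M" "\<And>x. x \<in> mu ` {0..} \<Longrightarrow> norm (G x) \<le> M"
    using bounded_lipschitz_gradient[OF bdd] by (metis bounded_lipschitz_onE)
  define h where "h = \<epsilon> / (2 * (C * M + 1))"
  have "0 \<le> C" using lip lipschitz_on_nonneg by blast
  then have "0 < h" unfolding h_def using \<open>\<epsilon> > 0\<close> M(1) by (simp add: add_nonneg_pos)
  then have "0 < \<epsilon>\<^sup>2 / 4 * h" using \<open>\<epsilon> > 0\<close> by simp
  obtain l where lim: "((\<lambda>t. f (mu t)) \<longlongrightarrow> l) at_top" and lower_l: "\<And>t. t \<ge> 0 \<Longrightarrow> l \<le> f (mu t)"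
    using grad_flow_energy_tendsto[OF gf lower] by blast
  obtain T where T: "\<And>t. t \<ge> T \<Longrightarrow> f (mu t) < l + \<epsilon>\<^sup>2 / 4 * h"
    using order_tendstoD(2)[OF lim, of "l + \<epsilon>\<^sup>2 / 4 * h"] \<open>0 < \<epsilon>\<^sup>2 / 4 * h\<close>
    unfolding eventually_at_top_linorder by auto
  obtain t where t: "t \<ge> max T 0" "\<epsilon> \<le> norm (G (mu t))" using large by blast
  have "f (mu (t + h)) \<le> f (mu t) - \<epsilon>\<^sup>2 / 4 * h"
    unfolding h_def using t \<open>\<epsilon> > 0\<close> M
    by (intro grad_flow_energy_drop[OF gf _ lip]) auto
  also have "\<dots> < l" using T[of t] t by simp
  finally show False using lower_l[of "t + h"] t \<open>0 < h\<close> by linarith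
qed

lemma grad_flow_limit_point:
  assumes gf: "grad_flow f mu mu0" and bdd: "bounded (mu ` {0..})" and lower: "\<And>x. m \<le> f x"
    and energy: "((\<lambda>t. f (mu t)) \<longlongrightarrow> l) at_top"
    and s: "filterlim s at_top sequentially" and q: "(\<lambda>k. mu (s k)) \<longlonglongrightarrow> q"
  shows "G q = 0" "f q = l"
proof -
  have "(\<lambda>k. G (mu (s k))) \<longlonglongrightarrow> G q" by (rule isCont_tendsto_compose[OF isCont_G q])
  moreover have "(\<lambda>k. G (mu (s k))) \<longlonglongrightarrow> 0"
    by (rule filterlim_compose[OF grad_flow_gradient_tendsto_zero[OF gf bdd lower] s])
  ultimately show "G q = 0" by (rule LIMSEQ_unique)
  have "(\<lambda>k. f (mu (s k))) \<longlonglongrightarrow> f q" by (rule isCont_tendsto_compose[OF isCont_f q])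
  moreover have "(\<lambda>k. f (mu (s k))) \<longlonglongrightarrow> l" by (rule filterlim_compose[OF energy s])
  ultimately show "f q = l" by (rule LIMSEQ_unique)
qed

end

section \<open>Symmetric matrices with simple spectrum\<close>

locale simple_spectrum =
  fixes S :: "real^'n^'n" and \<sigma> :: "nat \<Rightarrow> real" and u :: "nat \<Rightarrow> real^'n"
  assumes sym: "transpose S = S"
    and simple: "\<And>i j. 1 \<le> i \<Longrightarrow> i < j \<Longrightarrow> j \<le> CARD('n) \<Longrightarrow> \<sigma> j < \<sigma> i"
    and eigvec: "\<And>i. 1 \<le> i \<Longrightarrow> i \<le> CARD('n) \<Longrightarrow> S *v u i = \<sigma> i *\<^sub>R u i"
    and unit: "\<And>i. 1 \<le> i \<Longrightarrow> i \<le> CARD('n) \<Longrightarrow> norm (u i) = 1"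
begin

lemma one_mem_indices: "1 \<in> {1..CARD('n)}"
  by (simp add: Suc_leI)

lemma eigval_inj: "i \<in> {1..CARD('n)} \<Longrightarrow> j \<in> {1..CARD('n)} \<Longrightarrow> \<sigma> i = \<sigma> j \<Longrightarrow> i = j"
  using simple[of i j] simple[of j i] by (cases i j rule: linorder_cases) auto

lemma eigval_less_first: "i \<in> {1..CARD('n)} \<Longrightarrow> i \<noteq> 1 \<Longrightarrow> \<sigma> i < \<sigma> 1"
  using simple[of 1 i] by auto

lemma eigval_le_first: "i \<in> {1..CARD('n)} \<Longrightarrow> \<sigma> i \<le> \<sigma> 1"
  using eigval_less_first[of i] by (cases "i = 1") auto

lemma eigval_ge_last: "i \<in> {1..CARD('n)} \<Longrightarrow> \<sigma> CARD('n) \<le> \<sigma> i"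
  using simple[of i "CARD('n)"] by (cases "i = CARD('n)") auto

lemma matrix_mul_S_S: "(S ** S) *v x = S *v (S *v x)"
  by (simp add: matrix_vector_mul_assoc)

lemma inner_S_commute: "(S *v x) \<bullet> y = x \<bullet> (S *v y)"
  using symmetric_matrix_inner[OF sym] .

lemma inner_eigvec_S: "i \<in> {1..CARD('n)} \<Longrightarrow> u i \<bullet> (S *v x) = \<sigma> i * (u i \<bullet> x)"
  using inner_S_commute[of "u i" x, symmetric] eigvec[of i] by auto

lemma inner_eigvec_SS: "i \<in> {1..CARD('n)} \<Longrightarrow> u i \<bullet> ((S ** S) *v x) = (\<sigma> i)\<^sup>2 * (u i \<bullet> x)"
  by (simp add: matrix_mul_S_S inner_eigvec_S power2_eq_square)

lemma eigvec_inner: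
  assumes "i \<in> {1..CARD('n)}" "j \<in> {1..CARD('n)}"
  shows "u i \<bullet> u j = (if i = j then 1 else 0)"
proof (cases "i = j")
  case True
  then show ?thesis using unit[of i] assms by (simp add: dot_square_norm)
next
  case False
  have "\<sigma> i * (u i \<bullet> u j) = \<sigma> j * (u i \<bullet> u j)"
    using inner_eigvec_S[OF assms(1), of "u j"] inner_eigvec_S[OF assms(2), of "u i"] eigvec[of j] assms
    by (auto simp: inner_commute)
  then show ?thesis using eigval_inj[OF assms] False by auto
qed

lemma eigvec_expansion: "x = (\<Sum>i\<in>{1..CARD('n)}. (u i \<bullet> x) *\<^sub>R u i)"
proof (rule ccontr)
  define r where "r = x - (\<Sum>i\<in>{1..CARD('n)}. (u i \<bullet> x) *\<^sub>R u i)"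
  assume "x \<noteq> (\<Sum>i\<in>{1..CARD('n)}. (u i \<bullet> x) *\<^sub>R u i)"
  then have "r \<noteq> 0" by (simp add: r_def)
  have r_orth: "u j \<bullet> r = 0" if j: "j \<in> {1..CARD('n)}" for j
  proof -
    have "u j \<bullet> (\<Sum>i\<in>{1..CARD('n)}. (u i \<bullet> x) *\<^sub>R u i) = (\<Sum>i\<in>{1..CARD('n)}. if i = j then u i \<bullet> x else 0)"
      unfolding inner_sum_right by (intro sum.cong) (auto simp: eigvec_inner[OF j])
    then show ?thesis using j by (simp add: r_def inner_diff_right)
  qed
  have "inj_on u {1..CARD('n)}" by (rule inj_onI) (metis eigvec_inner zero_neq_one)
  moreover have "r \<notin> u ` {1..CARD('n)}" using r_orth eigvec_inner by force
  ultimately have "card (insert r (u ` {1..CARD('n)})) = Suc CARD('n)"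
    by (simp add: card_image)
  moreover have "independent (insert r (u ` {1..CARD('n)}))"
  proof (rule pairwise_orthogonal_independent)
    show "pairwise orthogonal (insert r (u ` {1..CARD('n)}))"
      unfolding pairwise_def orthogonal_def using r_orth eigvec_inner by (auto simp: inner_commute)
    show "0 \<notin> insert r (u ` {1..CARD('n)})" using \<open>r \<noteq> 0\<close> unit by force
  qed
  then have "card (insert r (u ` {1..CARD('n)})) \<le> CARD('n)"
    using independent_bound[where 'a="real^'n"] by simp
  ultimately show False by simp
qed

lemma inner_eigvec_expansion: "x \<bullet> y = (\<Sum>i\<in>{1..CARD('n)}. (u i \<bullet> x) * (u i \<bullet> y))"
  by (subst (2) eigvec_expansion) (simp add: inner_sum_right inner_commute mult.commute)

lemma norm_eigvec_expansion: "(norm x)\<^sup>2 = (\<Sum>i\<in>{1..CARD('n)}. (u i \<bullet> x)\<^sup>2)"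
  unfolding power2_norm_eq_inner by (simp add: inner_eigvec_expansion[of x x] power2_eq_square)

lemma eq_scaleR_eigvec:
  assumes "j \<in> {1..CARD('n)}" "\<And>i. i \<in> {1..CARD('n)} \<Longrightarrow> i \<noteq> j \<Longrightarrow> u i \<bullet> x = 0"
  shows "x = (u j \<bullet> x) *\<^sub>R u j"
proof -
  have "x = (\<Sum>i\<in>{1..CARD('n)}. if i = j then (u i \<bullet> x) *\<^sub>R u i else 0)"
    by (subst eigvec_expansion) (rule sum.cong, auto simp: assms(2))
  then show ?thesis using assms(1) by simp
qed

lemma quadratic_form_S: "x \<bullet> (S *v x) = (\<Sum>i\<in>{1..CARD('n)}. \<sigma> i * (u i \<bullet> x)\<^sup>2)"
  unfolding inner_eigvec_expansion[of x "S *v x"]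
  by (rule sum.cong) (auto simp: inner_eigvec_S power2_eq_square)

lemma quadratic_form_SS: "x \<bullet> ((S ** S) *v x) = (\<Sum>i\<in>{1..CARD('n)}. (\<sigma> i)\<^sup>2 * (u i \<bullet> x)\<^sup>2)"
  unfolding inner_eigvec_expansion[of x "(S ** S) *v x"]
  by (rule sum.cong) (auto simp: inner_eigvec_SS power2_eq_square)

end

section \<open>The linear-attention risk as a function of two quadratic forms\<close>

locale linear_attention = simple_spectrum S \<sigma> u
  for S :: "real^'n^'n" and \<sigma> :: "nat \<Rightarrow> real" and u :: "nat \<Rightarrow> real^'n" +
  fixes lam :: real and L :: nat
  assumes lam_pos: "lam > 0" and L_ge: "L \<ge> 1"
    and posdef: "\<And>x. x \<noteq> 0 \<Longrightarrow> x \<bullet> (S *v x) > 0"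
    and last_pos: "\<sigma> CARD('n) > 0"
begin

definition \<kappa> :: real where "\<kappa> = lam / real L"

definition form_a :: "real^'n \<Rightarrow> real" where "form_a x = x \<bullet> (S *v x)"

definition form_b :: "real^'n \<Rightarrow> real" where "form_b x = x \<bullet> ((S ** S) *v x)"

text \<open>\<open>risk_da\<close> and \<open>risk_db\<close> are the partial derivatives of \<open>risk_ab\<close> at \<open>(form_a x, form_b x)\<close>.\<close>
definition risk_ab :: "real \<Rightarrow> real \<Rightarrow> real" where
  "risk_ab p q = trace S - 2 * \<kappa> * trace S * p - 2 * \<kappa> * (real L + 1) * q
     + \<kappa>\<^sup>2 * (real L + 2) * trace S * p\<^sup>2 + \<kappa>\<^sup>2 * (real L + 2) * (real L + 3) * p * q"

definition risk_da :: "real^'n \<Rightarrow> real" where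
  "risk_da x = - 2 * \<kappa> * trace S + 2 * \<kappa>\<^sup>2 * (real L + 2) * trace S * form_a x
     + \<kappa>\<^sup>2 * (real L + 2) * (real L + 3) * form_b x"

definition risk_db :: "real^'n \<Rightarrow> real" where
  "risk_db x = - 2 * \<kappa> * (real L + 1) + \<kappa>\<^sup>2 * (real L + 2) * (real L + 3) * form_a x"

definition risk_grad :: "real^'n \<Rightarrow> real^'n" where
  "risk_grad x = (2 * risk_da x) *\<^sub>R (S *v x) + (2 * risk_db x) *\<^sub>R ((S ** S) *v x)"

lemma \<kappa>_pos: "\<kappa> > 0"
  using lam_pos L_ge by (simp add: \<kappa>_def)

lemma real_L_ge: "real L \<ge> 1"
  using L_ge by simp

lemma eigval_pos: "i \<in> {1..CARD('n)} \<Longrightarrow> \<sigma> i > 0"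
  using eigval_ge_last[of i] last_pos by simp

lemma trace_pos: "trace S > 0"
proof -
  have "S $ i $ i > 0" for i
    using posdef[of "axis i 1"]
    by (simp add: axis_eq_0_iff matrix_vector_mul_component inner_axis inner_axis' cart_eq_inner_axis[symmetric])
  then show ?thesis unfolding trace_def by (intro sum_pos) auto
qed

lemma R_lin_eq_risk_ab: "R_lin lam L S x = risk_ab (form_a x) (form_b x)"
  using L_ge by (simp add: R_lin_def risk_ab_def form_a_def form_b_def \<kappa>_def Let_def field_simps power2_eq_square)

lemma has_gradient_R_lin: "GDERIV (R_lin lam L S) x :> risk_grad x"
proof -
  have "GDERIV form_a x :> 2 *\<^sub>R (S *v x)"
    unfolding form_a_def[abs_def] by (rule GDERIV_quadratic_form[OF sym])
  moreover have "GDERIV form_b x :> 2 *\<^sub>R ((S ** S) *v x)"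
    unfolding form_b_def[abs_def] by (rule GDERIV_quadratic_form) (simp add: matrix_transpose_mul sym)
  ultimately show ?thesis
    unfolding R_lin_eq_risk_ab[abs_def] risk_ab_def gderiv_def
    by (auto intro!: derivative_eq_intros simp: fun_eq_iff risk_grad_def risk_da_def risk_db_def
        inner_add_right algebra_simps power2_eq_square)
qed

lemma inner_eigvec_risk_grad:
  "i \<in> {1..CARD('n)} \<Longrightarrow> u i \<bullet> risk_grad x = 2 * \<sigma> i * (risk_da x + \<sigma> i * risk_db x) * (u i \<bullet> x)"
  by (simp add: risk_grad_def inner_add_right inner_eigvec_S inner_eigvec_SS algebra_simps power2_eq_square)

lemma form_a_expansion: "form_a x = (\<Sum>i\<in>{1..CARD('n)}. \<sigma> i * (u i \<bullet> x)\<^sup>2)"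
  unfolding form_a_def by (rule quadratic_form_S)

lemma form_b_expansion: "form_b x = (\<Sum>i\<in>{1..CARD('n)}. (\<sigma> i)\<^sup>2 * (u i \<bullet> x)\<^sup>2)"
  unfolding form_b_def by (rule quadratic_form_SS)

lemma form_a_nonneg: "form_a x \<ge> 0"
  unfolding form_a_expansion using eigval_pos by (intro sum_nonneg) (simp add: less_imp_le)

lemma form_b_nonneg: "form_b x \<ge> 0"
  unfolding form_b_expansion by (intro sum_nonneg) simp

lemma form_b_pos:
  assumes "x \<noteq> 0"
  shows "form_b x > 0"
proof -
  have "S *v x \<noteq> 0" using posdef[OF assms] by auto
  then show ?thesis
    unfolding form_b_def matrix_mul_S_S using inner_S_commute[of x "S *v x"] by (metis inner_gt_zero_iff)
qed

lemma form_a_ge_norm: "\<sigma> CARD('n) * (norm x)\<^sup>2 \<le> form_a x"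
  unfolding norm_eigvec_expansion form_a_expansion sum_distrib_left
  using eigval_ge_last by (intro sum_mono mult_right_mono) auto

lemma first_eigval_form_a_minus_form_b:
  "\<sigma> 1 * form_a x - form_b x = (\<Sum>i\<in>{1..CARD('n)}. \<sigma> i * (\<sigma> 1 - \<sigma> i) * (u i \<bullet> x)\<^sup>2)"
  unfolding form_a_expansion form_b_expansion sum_distrib_left sum_subtractf[symmetric]
  by (rule sum.cong) (auto simp: algebra_simps power2_eq_square)

lemma first_eigval_weight_nonneg: "i \<in> {1..CARD('n)} \<Longrightarrow> 0 \<le> \<sigma> i * (\<sigma> 1 - \<sigma> i) * c\<^sup>2"
  using eigval_pos[of i] eigval_le_first[of i] by simp

lemma form_b_le_form_a: "form_b x \<le> \<sigma> 1 * form_a x"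
  using first_eigval_form_a_minus_form_b[of x] first_eigval_weight_nonneg sum_nonneg
  by (metis (no_types, lifting) diff_ge_0_iff_ge)

lemma eq_first_eigvec_if_form_b_eq:
  assumes "form_b x = \<sigma> 1 * form_a x"
  shows "x = (u 1 \<bullet> x) *\<^sub>R u 1"
proof (rule eq_scaleR_eigvec[OF one_mem_indices])
  fix i assume i: "i \<in> {1..CARD('n)}" "i \<noteq> 1"
  have "(\<Sum>i\<in>{1..CARD('n)}. \<sigma> i * (\<sigma> 1 - \<sigma> i) * (u i \<bullet> x)\<^sup>2) = 0"
    using first_eigval_form_a_minus_form_b[of x] assms by simp
  then have "\<sigma> i * (\<sigma> 1 - \<sigma> i) * (u i \<bullet> x)\<^sup>2 = 0"
    using i(1) first_eigval_weight_nonneg by (subst (asm) sum_nonneg_eq_0_iff) auto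
  then show "u i \<bullet> x = 0" using i eigval_pos[of i] eigval_less_first[of i] by simp
qed

text \<open>Along the ray \<open>q = s p\<close>, \<open>risk_ab\<close> is the quadratic \<open>trace S - 2 ray_P s p + ray_Q s p\<^sup>2\<close>, with
  minimum \<open>ray_min s\<close>. At \<open>x = c u\<^sub>j\<close> one has \<open>(a, b) = (\<sigma>\<^sub>j c\<^sup>2, \<sigma>\<^sub>j a)\<close>, and the minimum over that ray
  is attained exactly when \<open>c\<^sup>2 = axis_sq \<sigma>\<^sub>j\<close>.\<close>
definition ray_P :: "real \<Rightarrow> real" where "ray_P s = \<kappa> * (trace S + (real L + 1) * s)"

definition ray_Q :: "real \<Rightarrow> real" where "ray_Q s = \<kappa>\<^sup>2 * (real L + 2) * (trace S + (real L + 3) * s)"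

definition ray_min :: "real \<Rightarrow> real" where "ray_min s = trace S - (ray_P s)\<^sup>2 / ray_Q s"

definition axis_sq :: "real \<Rightarrow> real" where
  "axis_sq s = (trace S + (real L + 1) * s) / (\<kappa> * (real L + 2) * s * (trace S + (real L + 3) * s))"

lemma ray_P_pos: "s \<ge> 0 \<Longrightarrow> ray_P s > 0"
  unfolding ray_P_def using \<kappa>_pos trace_pos real_L_ge by (intro mult_pos_pos add_pos_nonneg) auto

lemma ray_Q_pos: "s \<ge> 0 \<Longrightarrow> ray_Q s > 0"
  unfolding ray_Q_def using \<kappa>_pos trace_pos real_L_ge by (intro mult_pos_pos add_pos_nonneg) auto

lemma axis_sq_pos: "s > 0 \<Longrightarrow> axis_sq s > 0"
  unfolding axis_sq_def using \<kappa>_pos trace_pos real_L_ge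
  by (intro divide_pos_pos mult_pos_pos add_pos_nonneg) auto

lemma alpha1_star_eq: "alpha1_star lam L S s = sqrt (axis_sq s)"
  unfolding alpha1_star_def axis_sq_def \<kappa>_def by simp

lemma axis_sq_iff:
  assumes "s > 0"
  shows "y = axis_sq s \<longleftrightarrow> \<kappa> * (real L + 2) * s * y * (trace S + (real L + 3) * s) = trace S + (real L + 1) * s"
proof -
  have "\<kappa> * (real L + 2) * s * (trace S + (real L + 3) * s) > 0"
    using assms \<kappa>_pos trace_pos real_L_ge by (intro mult_pos_pos add_pos_nonneg) auto
  then show ?thesis unfolding axis_sq_def by (auto simp: field_simps)
qed

lemma ray_P_div_ray_Q:
  assumes "s > 0"
  shows "ray_P s / ray_Q s = s * axis_sq s"
proof -
  define N where "N = trace S + (real L + 1) * s"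
  define D where "D = trace S + (real L + 3) * s"
  have "ray_P s / ray_Q s = (\<kappa> * N) / (\<kappa> * (\<kappa> * (real L + 2) * D))"
    unfolding ray_P_def ray_Q_def N_def D_def by (simp add: power2_eq_square mult.assoc)
  also have "\<dots> = (s * N) / (s * (\<kappa> * (real L + 2) * D))" using \<kappa>_pos assms by simp
  also have "\<dots> = s * axis_sq s" unfolding axis_sq_def N_def D_def by (simp add: mult.assoc mult.left_commute)
  finally show ?thesis .
qed

lemma axis_sq_less:
  assumes "s > 0"
  shows "\<kappa> * (real L + 2) * s * axis_sq s < 1"
proof (rule ccontr)
  define w where "w = \<kappa> * (real L + 2) * s * axis_sq s"
  assume "\<not> ?thesis"
  then have "1 * (trace S + (real L + 3) * s) \<le> w * (trace S + (real L + 3) * s)"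
    using assms trace_pos unfolding w_def by (intro mult_right_mono) auto
  moreover have "w * (trace S + (real L + 3) * s) = trace S + (real L + 1) * s"
    using axis_sq_iff[OF assms, of "axis_sq s"] unfolding w_def by simp
  ultimately show False using assms by simp
qed

lemma risk_ab_ray: "risk_ab p (s * p) = trace S - 2 * ray_P s * p + ray_Q s * p\<^sup>2"
  unfolding risk_ab_def ray_P_def ray_Q_def by (simp add: algebra_simps power2_eq_square)

lemma risk_ab_ray_minus_ray_min:
  "s \<ge> 0 \<Longrightarrow> ray_Q s * (risk_ab p (s * p) - ray_min s) = (ray_Q s * p - ray_P s)\<^sup>2"
  unfolding risk_ab_ray ray_min_def using ray_Q_pos[of s] by (simp add: field_simps power2_eq_square)

lemma ray_min_le_risk_ab_ray: "s \<ge> 0 \<Longrightarrow> ray_min s \<le> risk_ab p (s * p)"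
  using risk_ab_ray_minus_ray_min[of s p] ray_Q_pos[of s]
  by (metis diff_ge_0_iff_ge zero_le_mult_iff zero_le_power2 not_less)

lemma risk_ab_zero_ge: "trace S * (real L + 1) / (real L + 2) \<le> risk_ab p 0"
proof -
  have "(real L + 2) * risk_ab p 0 = trace S * (real L + 1) + trace S * (1 - \<kappa> * (real L + 2) * p)\<^sup>2"
    unfolding risk_ab_def by (simp add: algebra_simps power2_eq_square)
  then have "trace S * (real L + 1) \<le> (real L + 2) * risk_ab p 0" using trace_pos by simp
  then show ?thesis by (simp add: pos_divide_le_eq mult.commute)
qed

lemma ray_min_less:
  assumes "s > 0"
  shows "ray_min s < trace S * (real L + 1) / (real L + 2)"
proof -
  define N where "N = trace S + (real L + 1) * s"
  define D where "D = trace S + (real L + 3) * s"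
  have "N\<^sup>2 - trace S * D = (real L - 1) * trace S * s + (real L + 1)\<^sup>2 * s\<^sup>2"
    unfolding N_def D_def by (simp add: algebra_simps power2_eq_square)
  moreover have "(real L - 1) * trace S * s \<ge> 0" using real_L_ge trace_pos assms by simp
  moreover have "(real L + 1)\<^sup>2 * s\<^sup>2 > 0" using assms by simp
  ultimately have "0 < N\<^sup>2 - trace S * D" by linarith
  moreover have "(ray_P s)\<^sup>2 * (real L + 2) - trace S * ray_Q s = \<kappa>\<^sup>2 * (real L + 2) * (N\<^sup>2 - trace S * D)"
    unfolding ray_P_def ray_Q_def N_def D_def by algebra
  moreover have "\<kappa>\<^sup>2 * (real L + 2) * (N\<^sup>2 - trace S * D) > 0"
    using \<open>0 < N\<^sup>2 - trace S * D\<close> \<kappa>_pos by simp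
  ultimately have "trace S * ray_Q s < (ray_P s)\<^sup>2 * (real L + 2)" by linarith
  then have "trace S / (real L + 2) < (ray_P s)\<^sup>2 / ray_Q s"
    using ray_Q_pos[of s] assms by (simp add: field_simps)
  moreover have "trace S * (real L + 1) / (real L + 2) = trace S - trace S / (real L + 2)"
    by (simp add: field_simps)
  ultimately show ?thesis unfolding ray_min_def by linarith
qed

text \<open>\<open>risk_ab\<close> is affine in \<open>q\<close>: if it increases in \<open>q\<close> it is bounded below by its value at \<open>q = 0\<close>,
  otherwise by its value on the boundary ray \<open>q = s p\<close> of the cone \<open>0 \<le> q \<le> s p\<close>.\<close>
lemma risk_ab_ge_ray_min:
  assumes "s > 0" "p \<ge> 0" "0 \<le> q" "q \<le> s * p"
  shows "ray_min s \<le> risk_ab p q"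
    and "risk_ab p q = ray_min s \<Longrightarrow> q = s * p \<and> p = ray_P s / ray_Q s"
proof -
  define \<beta> where "\<beta> = - 2 * \<kappa> * (real L + 1) + \<kappa>\<^sup>2 * (real L + 2) * (real L + 3) * p"
  have affine0: "risk_ab p q = risk_ab p 0 + \<beta> * q"
    and affine: "risk_ab p q = risk_ab p (s * p) + \<beta> * (q - s * p)"
    unfolding \<beta>_def risk_ab_def by (simp_all add: algebra_simps)
  have "ray_min s \<le> risk_ab p (s * p)" using ray_min_le_risk_ab_ray assms(1) by simp
  have "ray_min s \<le> risk_ab p q \<and> (risk_ab p q = ray_min s \<longrightarrow> q = s * p \<and> p = ray_P s / ray_Q s)"
  proof (cases "\<beta> \<ge> 0")
    case True
    then have "risk_ab p 0 \<le> risk_ab p q" using affine0 assms(3) by simp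
    then show ?thesis using risk_ab_zero_ge[of p] ray_min_less[OF assms(1)] by linarith
  next
    case False
    then have "0 \<le> \<beta> * (q - s * p)" using assms(4) by (simp add: mult_nonpos_nonpos)
    then have "ray_min s \<le> risk_ab p q"
      using affine \<open>ray_min s \<le> risk_ab p (s * p)\<close> by linarith
    moreover have "q = s * p \<and> p = ray_P s / ray_Q s" if "risk_ab p q = ray_min s"
    proof -
      have "\<beta> * (q - s * p) = 0"
        using that affine \<open>ray_min s \<le> risk_ab p (s * p)\<close> \<open>0 \<le> \<beta> * (q - s * p)\<close> by linarith
      then have "q = s * p" using False by simp
      then have "(ray_Q s * p - ray_P s)\<^sup>2 = 0"
        using that risk_ab_ray_minus_ray_min[of s p] assms(1) by simp
      then show ?thesis using \<open>q = s * p\<close> ray_Q_pos[of s] assms(1) by (simp add: eq_divide_eq mult.commute)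
    qed
    ultimately show ?thesis by blast
  qed
  then show "ray_min s \<le> risk_ab p q" and "risk_ab p q = ray_min s \<Longrightarrow> q = s * p \<and> p = ray_P s / ray_Q s"
    by auto
qed

lemma ray_min_strict_antimono:
  assumes "0 < s" "s < t"
  shows "ray_min t < ray_min s"
proof -
  define l where "l = real L"
  define N1 where "N1 = trace S + (l + 1) * s"
  define N2 where "N2 = trace S + (l + 1) * t"
  define D1 where "D1 = trace S + (l + 3) * s"
  define D2 where "D2 = trace S + (l + 3) * t"
  have "N2\<^sup>2 * D1 - N1\<^sup>2 * D2
      = (t - s) * ((l - 1) * (trace S)\<^sup>2 + (l + 1)\<^sup>2 * trace S * (s + t) + (l + 1)\<^sup>2 * (l + 3) * s * t)"
    unfolding N1_def N2_def D1_def D2_def by algebra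
  moreover have "(l - 1) * (trace S)\<^sup>2 + (l + 1)\<^sup>2 * trace S * (s + t) + (l + 1)\<^sup>2 * (l + 3) * s * t > 0"
    using real_L_ge assms trace_pos unfolding l_def by (intro add_nonneg_pos add_pos_pos) auto
  moreover have "t - s > 0" using assms by simp
  ultimately have "N1\<^sup>2 * D2 < N2\<^sup>2 * D1" by (smt (verit) mult_pos_pos)
  moreover have "(ray_P s)\<^sup>2 * ray_Q t = \<kappa> ^ 4 * (l + 2) * (N1\<^sup>2 * D2)"
    "(ray_P t)\<^sup>2 * ray_Q s = \<kappa> ^ 4 * (l + 2) * (N2\<^sup>2 * D1)"
    unfolding ray_P_def ray_Q_def N1_def N2_def D1_def D2_def l_def by algebra+
  moreover have "\<kappa> ^ 4 * (l + 2) > 0" using \<kappa>_pos unfolding l_def by simp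
  ultimately have "(ray_P s)\<^sup>2 * ray_Q t < (ray_P t)\<^sup>2 * ray_Q s"
    by (metis mult_strict_left_mono)
  then have "(ray_P s)\<^sup>2 / ray_Q s < (ray_P t)\<^sup>2 / ray_Q t"
    using ray_Q_pos[of s] ray_Q_pos[of t] assms by (simp add: field_simps)
  then show ?thesis unfolding ray_min_def by simp
qed

lemma ray_min_less_trace: "s > 0 \<Longrightarrow> ray_min s < trace S"
  unfolding ray_min_def using ray_P_pos[of s] ray_Q_pos[of s] by simp

section \<open>Minimizers and critical points\<close>

lemma form_a_axis: "j \<in> {1..CARD('n)} \<Longrightarrow> form_a (c *\<^sub>R u j) = \<sigma> j * c\<^sup>2"
  unfolding form_a_def using eigvec[of j] eigvec_inner[of j j]
  by (simp add: matrix_vector_mult_scaleR power2_eq_square)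

lemma form_b_axis: "j \<in> {1..CARD('n)} \<Longrightarrow> form_b (c *\<^sub>R u j) = (\<sigma> j)\<^sup>2 * c\<^sup>2"
  unfolding form_b_def matrix_mul_S_S using eigvec[of j] eigvec_inner[of j j]
  by (simp add: matrix_vector_mult_scaleR power2_eq_square)

lemma R_lin_zero: "R_lin lam L S 0 = trace S"
  by (simp add: R_lin_eq_risk_ab risk_ab_def form_a_def form_b_def)

lemma R_lin_axis:
  assumes "j \<in> {1..CARD('n)}" "c\<^sup>2 = axis_sq (\<sigma> j)"
  shows "R_lin lam L S (c *\<^sub>R u j) = ray_min (\<sigma> j)"
proof -
  have "\<sigma> j > 0" using eigval_pos[OF assms(1)] .
  have "R_lin lam L S (c *\<^sub>R u j) = risk_ab (\<sigma> j * c\<^sup>2) (\<sigma> j * (\<sigma> j * c\<^sup>2))"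
    by (simp add: R_lin_eq_risk_ab form_a_axis[OF assms(1)] form_b_axis[OF assms(1)] power2_eq_square mult.assoc)
  moreover have "ray_Q (\<sigma> j) * (\<sigma> j * c\<^sup>2) - ray_P (\<sigma> j) = 0"
    using ray_P_div_ray_Q[OF \<open>\<sigma> j > 0\<close>] ray_Q_pos[of "\<sigma> j"] \<open>\<sigma> j > 0\<close> assms(2) by (simp add: field_simps)
  ultimately show ?thesis
    using risk_ab_ray_minus_ray_min[of "\<sigma> j" "\<sigma> j * c\<^sup>2"] ray_Q_pos[of "\<sigma> j"] \<open>\<sigma> j > 0\<close> by simp
qed

lemma R_lin_ge_ray_min: "ray_min (\<sigma> 1) \<le> R_lin lam L S x"
  unfolding R_lin_eq_risk_ab
  by (rule risk_ab_ge_ray_min(1)[OF eigval_pos[OF one_mem_indices] form_a_nonneg form_b_nonneg form_b_le_form_a])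

abbreviation \<alpha> :: real where "\<alpha> \<equiv> alpha1_star lam L S (\<sigma> 1)"

lemma alpha_sq: "\<alpha>\<^sup>2 = axis_sq (\<sigma> 1)" and alpha_pos: "\<alpha> > 0"
  using alpha1_star_eq axis_sq_pos[OF eigval_pos[OF one_mem_indices]] by auto

lemma minimizers_R_lin:
  "{x. \<forall>y. R_lin lam L S x \<le> R_lin lam L S y} = {\<alpha> *\<^sub>R u 1, - (\<alpha> *\<^sub>R u 1)}"
proof -
  have min_value: "R_lin lam L S (c *\<^sub>R u 1) = ray_min (\<sigma> 1)" if "c = \<alpha> \<or> c = - \<alpha>" for c
    using R_lin_axis[OF one_mem_indices, of c] alpha_sq that by auto
  have minimal: "x = \<alpha> *\<^sub>R u 1 \<or> x = - (\<alpha> *\<^sub>R u 1)" if "R_lin lam L S x \<le> ray_min (\<sigma> 1)" for x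
  proof -
    have "risk_ab (form_a x) (form_b x) = ray_min (\<sigma> 1)"
      using that R_lin_ge_ray_min[of x] unfolding R_lin_eq_risk_ab by simp
    from risk_ab_ge_ray_min(2)[OF eigval_pos[OF one_mem_indices] form_a_nonneg form_b_nonneg form_b_le_form_a this]
    have "x = (u 1 \<bullet> x) *\<^sub>R u 1" and "form_a x = ray_P (\<sigma> 1) / ray_Q (\<sigma> 1)"
      using eq_first_eigvec_if_form_b_eq by auto
    then have "\<sigma> 1 * (u 1 \<bullet> x)\<^sup>2 = \<sigma> 1 * \<alpha>\<^sup>2"
      using form_a_axis[OF one_mem_indices, of "u 1 \<bullet> x"] ray_P_div_ray_Q[OF eigval_pos[OF one_mem_indices]]
        alpha_sq by simp
    then have "u 1 \<bullet> x = \<alpha> \<or> u 1 \<bullet> x = - \<alpha>"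
      using eigval_pos[OF one_mem_indices] by (simp add: power2_eq_iff)
    then show ?thesis using \<open>x = (u 1 \<bullet> x) *\<^sub>R u 1\<close> by (metis scaleR_minus_left)
  qed
  show ?thesis
  proof (intro equalityI subsetI)
    fix x assume "x \<in> {x. \<forall>y. R_lin lam L S x \<le> R_lin lam L S y}"
    then have "R_lin lam L S x \<le> R_lin lam L S (\<alpha> *\<^sub>R u 1)" by simp
    then have "R_lin lam L S x \<le> ray_min (\<sigma> 1)" using min_value[of \<alpha>] by simp
    then show "x \<in> {\<alpha> *\<^sub>R u 1, - (\<alpha> *\<^sub>R u 1)}" using minimal by blast
  next
    fix x assume "x \<in> {\<alpha> *\<^sub>R u 1, - (\<alpha> *\<^sub>R u 1)}"
    then have "R_lin lam L S x = ray_min (\<sigma> 1)" using min_value[of \<alpha>] min_value[of "- \<alpha>"] by auto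
    then show "x \<in> {x. \<forall>y. R_lin lam L S x \<le> R_lin lam L S y}" using R_lin_ge_ray_min by simp
  qed
qed

lemma risk_da_plus_risk_db_axis:
  "j \<in> {1..CARD('n)} \<Longrightarrow> risk_da (c *\<^sub>R u j) + \<sigma> j * risk_db (c *\<^sub>R u j)
    = 2 * \<kappa> * (\<kappa> * (real L + 2) * \<sigma> j * c\<^sup>2 * (trace S + (real L + 3) * \<sigma> j) - (trace S + (real L + 1) * \<sigma> j))"
  unfolding risk_da_def risk_db_def by (simp add: form_a_axis form_b_axis) (simp add: algebra_simps power2_eq_square)

lemma axis_stationary_iff:
  assumes "j \<in> {1..CARD('n)}"
  shows "risk_da (c *\<^sub>R u j) + \<sigma> j * risk_db (c *\<^sub>R u j) = 0 \<longleftrightarrow> c\<^sup>2 = axis_sq (\<sigma> j)"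
  using risk_da_plus_risk_db_axis[OF assms, of c] axis_sq_iff[OF eigval_pos[OF assms], of "c\<^sup>2"] \<kappa>_pos
  by auto

lemma risk_db_axis_neg:
  assumes "j \<in> {1..CARD('n)}" "c\<^sup>2 = axis_sq (\<sigma> j)"
  shows "risk_db (c *\<^sub>R u j) < 0"
proof -
  define w where "w = \<kappa> * (real L + 2) * \<sigma> j * c\<^sup>2"
  have "w < 1" using axis_sq_less[OF eigval_pos[OF assms(1)]] assms(2) unfolding w_def by simp
  then have "(real L + 3) * w < real L + 3" by (simp add: mult_less_cancel_left1)
  then have "- 2 * (real L + 1) + (real L + 3) * w < 0" using real_L_ge by (smt (verit))
  moreover have "risk_db (c *\<^sub>R u j) = \<kappa> * (- 2 * (real L + 1) + (real L + 3) * w)"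
    unfolding risk_db_def w_def by (simp add: form_a_axis[OF assms(1)]) (simp add: algebra_simps power2_eq_square)
  ultimately show ?thesis using \<kappa>_pos by (simp add: mult_pos_neg)
qed

lemma risk_grad_zero_coordinate:
  "risk_grad x = 0 \<Longrightarrow> i \<in> {1..CARD('n)} \<Longrightarrow> (risk_da x + \<sigma> i * risk_db x) * (u i \<bullet> x) = 0"
  using inner_eigvec_risk_grad[of i x] eigval_pos[of i] by simp

lemma risk_da_pos_if_risk_db_zero:
  assumes "risk_db x = 0" "x \<noteq> 0"
  shows "risk_da x > 0"
proof -
  have "\<kappa> * (\<kappa> * (real L + 2) * form_a x * (real L + 3)) = \<kappa> * (2 * (real L + 1))"
    using assms(1) unfolding risk_db_def by (simp add: algebra_simps power2_eq_square)
  then have "\<kappa> * (real L + 2) * form_a x * (real L + 3) = 2 * (real L + 1)" using \<kappa>_pos by simp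
  then have "1 * (real L + 3) \<le> \<kappa> * (real L + 2) * form_a x * (real L + 3)" using real_L_ge by simp
  then have "1 \<le> \<kappa> * (real L + 2) * form_a x" by (rule mult_right_le_imp_le) simp
  then have "2 * \<kappa> * trace S * 1 \<le> 2 * \<kappa> * trace S * (\<kappa> * (real L + 2) * form_a x)"
    using \<kappa>_pos trace_pos by (intro mult_left_mono) auto
  moreover have "\<kappa>\<^sup>2 * (real L + 2) * (real L + 3) * form_b x > 0" using form_b_pos[OF assms(2)] \<kappa>_pos by simp
  ultimately show ?thesis unfolding risk_da_def by (simp add: algebra_simps power2_eq_square)
qed

text \<open>Two nonzero coordinates of a critical point would force \<open>risk_db = 0\<close>, hence \<open>risk_da > 0\<close>,
  contradicting stationarity.\<close>
lemma critical_point_single_coordinate: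
  assumes "risk_grad x = 0" "i \<in> {1..CARD('n)}" "j \<in> {1..CARD('n)}" "u i \<bullet> x \<noteq> 0" "u j \<bullet> x \<noteq> 0"
  shows "i = j"
proof (rule ccontr)
  assume "i \<noteq> j"
  have "risk_da x + \<sigma> i * risk_db x = 0" "risk_da x + \<sigma> j * risk_db x = 0"
    using risk_grad_zero_coordinate[OF assms(1)] assms(2-5) by auto
  moreover have "\<sigma> i \<noteq> \<sigma> j" using eigval_inj assms(2,3) \<open>i \<noteq> j\<close> by blast
  moreover have "(\<sigma> i - \<sigma> j) * risk_db x = (risk_da x + \<sigma> i * risk_db x) - (risk_da x + \<sigma> j * risk_db x)"
    by (simp add: algebra_simps)
  ultimately have "(\<sigma> i - \<sigma> j) * risk_db x = 0" by simp
  then have "risk_db x = 0" "risk_da x = 0"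
    using \<open>\<sigma> i \<noteq> \<sigma> j\<close> \<open>risk_da x + \<sigma> i * risk_db x = 0\<close> by auto
  moreover have "x \<noteq> 0" using assms(4) by auto
  ultimately show False using risk_da_pos_if_risk_db_zero[of x] by simp
qed

lemma critical_point_cases:
  assumes "risk_grad x = 0"
  obtains "x = 0"
    | j c where "j \<in> {1..CARD('n)}" "c \<noteq> 0" "x = c *\<^sub>R u j" "c\<^sup>2 = axis_sq (\<sigma> j)"
proof (cases "x = 0")
  case False
  then obtain j where j: "j \<in> {1..CARD('n)}" "u j \<bullet> x \<noteq> 0"
    using eigvec_expansion[of x] by (metis (no_types, lifting) scale_eq_0_iff sum.neutral)
  then have x: "x = (u j \<bullet> x) *\<^sub>R u j"
    using critical_point_single_coordinate[OF assms] by (intro eq_scaleR_eigvec) blast+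
  have "risk_da x + \<sigma> j * risk_db x = 0" using risk_grad_zero_coordinate[OF assms j(1)] j(2) by simp
  then have "(u j \<bullet> x)\<^sup>2 = axis_sq (\<sigma> j)" using axis_stationary_iff[OF j(1)] x by metis
  then show thesis using that(2)[OF j(1) j(2) x] by blast
qed

lemma critical_point_unstable_first:
  assumes "risk_grad p = 0" "u 1 \<bullet> p = 0"
  shows "risk_da p + \<sigma> 1 * risk_db p < 0"
  using assms(1)
proof (cases rule: critical_point_cases)
  case 1
  then have "risk_da p + \<sigma> 1 * risk_db p = - 2 * (\<kappa> * trace S) - 2 * (\<kappa> * \<sigma> 1 * (real L + 1))"
    by (simp add: risk_da_def risk_db_def form_a_def form_b_def algebra_simps)
  moreover have "0 < \<kappa> * trace S" "0 < \<kappa> * \<sigma> 1 * (real L + 1)"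
    using \<kappa>_pos trace_pos eigval_pos[OF one_mem_indices] by simp_all
  ultimately show ?thesis by linarith
next
  case (2 j c)
  have "j \<noteq> 1" using assms(2) 2 eigvec_inner[OF one_mem_indices 2(1)] by auto
  have "risk_da p + \<sigma> 1 * risk_db p = (\<sigma> 1 - \<sigma> j) * risk_db p"
    using axis_stationary_iff[OF 2(1), of c] 2 by (simp add: algebra_simps)
  moreover have "\<sigma> 1 - \<sigma> j > 0" using eigval_less_first[OF 2(1) \<open>j \<noteq> 1\<close>] by simp
  ultimately show ?thesis using risk_db_axis_neg[OF 2(1,4)] 2(3) by (simp add: mult_pos_neg)
qed

lemma critical_point_first_coordinate:
  assumes "risk_grad p = 0" "u 1 \<bullet> p \<noteq> 0"
  shows "p = \<alpha> *\<^sub>R u 1 \<or> p = - (\<alpha> *\<^sub>R u 1)"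
  using assms(1)
proof (cases rule: critical_point_cases)
  case (2 j c)
  then have "j = 1" using assms(2) eigvec_inner[OF one_mem_indices 2(1)] by (auto split: if_splits)
  then have "c\<^sup>2 = \<alpha>\<^sup>2" using 2(4) alpha_sq by simp
  then have "c = \<alpha> \<or> c = - \<alpha>" by (simp add: power2_eq_iff)
  then show ?thesis using 2(3) \<open>j = 1\<close> by auto
qed (use assms(2) in simp)

lemma ray_min_eigval_inj:
  assumes "i \<in> {1..CARD('n)}" "j \<in> {1..CARD('n)}" "ray_min (\<sigma> i) = ray_min (\<sigma> j)"
  shows "i = j"
proof -
  have "\<sigma> i = \<sigma> j"
  proof (cases "\<sigma> i" "\<sigma> j" rule: linorder_cases)
    case less
    then show ?thesis using ray_min_strict_antimono[OF eigval_pos[OF assms(1)] less] assms(3) by simp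
  next
    case greater
    then show ?thesis using ray_min_strict_antimono[OF eigval_pos[OF assms(2)] greater] assms(3) by simp
  qed
  then show ?thesis using eigval_inj assms(1,2) by blast
qed

text \<open>Critical values separate the origin and the eigen-axes, and on an axis the two critical
  points differ in the sign of their coordinate.\<close>
lemma critical_point_eq:
  assumes "risk_grad p = 0" "risk_grad q = 0" "R_lin lam L S p = R_lin lam L S q"
    and same_sign: "\<And>j. j \<in> {1..CARD('n)} \<Longrightarrow> 0 \<le> (u j \<bullet> p) * (u j \<bullet> q)"
  shows "p = q"
proof -
  have axis_below_zero: "R_lin lam L S (c *\<^sub>R u j) < R_lin lam L S 0"
    if "j \<in> {1..CARD('n)}" "c\<^sup>2 = axis_sq (\<sigma> j)" for j c
    using R_lin_axis[OF that] R_lin_zero ray_min_less_trace[OF eigval_pos[OF that(1)]] by simp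
  from assms(1) show ?thesis
  proof (cases rule: critical_point_cases)
    case 1
    from assms(2) show ?thesis
    proof (cases rule: critical_point_cases)
      case (2 j d)
      then show ?thesis using 1 assms(3) axis_below_zero[OF 2(1,4)] by simp
    qed (use 1 in simp)
  next
    case (2 i c)
    note p = this
    from assms(2) show ?thesis
    proof (cases rule: critical_point_cases)
      case 1
      then show ?thesis using p assms(3) axis_below_zero[OF p(1,4)] by simp
    next
      case (2 j d)
      have "ray_min (\<sigma> i) = ray_min (\<sigma> j)"
        using assms(3) R_lin_axis[OF p(1,4)] R_lin_axis[OF 2(1,4)] p(3) 2(3) by simp
      then have "i = j" using ray_min_eigval_inj[OF p(1) 2(1)] by simp
      have "u i \<bullet> p = c" "u i \<bullet> q = d"
        using p(3) 2(3) \<open>i = j\<close> eigvec_inner[OF p(1) p(1)] by simp_all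
      then have "0 \<le> c * d" using same_sign[OF p(1)] by simp
      have "c\<^sup>2 = d\<^sup>2" using p(4) 2(4) \<open>i = j\<close> by simp
      then have "c = d \<or> c = - d" by (simp add: power2_eq_iff)
      moreover have "c \<noteq> - d"
      proof
        assume "c = - d"
        then have "c * d = - c\<^sup>2" by (simp add: power2_eq_square)
        then show False using \<open>0 \<le> c * d\<close> p(2) by simp
      qed
      ultimately show ?thesis using p(3) 2(3) \<open>i = j\<close> by simp
    qed
  qed
qed

text \<open>The identity for \<open>\<sigma>\<^sub>1\<close> is the stationarity condition \<open>risk_da + \<sigma>\<^sub>1 risk_db = 0\<close> in the direction
  \<open>u\<^sub>1\<close>, with both partial derivatives divided by \<open>\<kappa>\<close>.\<close>
lemma minimizer_direction_and_eigval:
  assumes "ms \<in> {\<alpha> *\<^sub>R u 1, - (\<alpha> *\<^sub>R u 1)}"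
  shows "(ms /\<^sub>R norm ms = u 1 \<or> ms /\<^sub>R norm ms = - u 1)
    \<and> \<sigma> 1 = - ((- 2 * trace S + 2 * (lam / real L) * (real L + 2) * trace S * (ms \<bullet> (S *v ms))
                  + (lam / real L) * (real L + 2) * (real L + 3) * (ms \<bullet> ((S ** S) *v ms)))
                / (- 2 * (real L + 1) + (lam / real L) * (real L + 2) * (real L + 3) * (ms \<bullet> (S *v ms))))"
proof
  have "ms = \<alpha> *\<^sub>R u 1 \<or> ms = (- \<alpha>) *\<^sub>R u 1" using assms by simp
  then obtain c where c: "ms = c *\<^sub>R u 1" "c = \<alpha> \<or> c = - \<alpha>" by blast
  then have "c\<^sup>2 = axis_sq (\<sigma> 1)" using alpha_sq by auto
  have "norm (u 1) = 1" using unit[of 1] one_mem_indices by simp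
  then show "ms /\<^sub>R norm ms = u 1 \<or> ms /\<^sub>R norm ms = - u 1" using c alpha_pos by auto
  have stationary: "risk_da ms + \<sigma> 1 * risk_db ms = 0" and "risk_db ms < 0"
    using axis_stationary_iff[OF one_mem_indices, of c] risk_db_axis_neg[OF one_mem_indices]
      \<open>c\<^sup>2 = axis_sq (\<sigma> 1)\<close> c(1) by simp_all
  define a b where "a = ms \<bullet> (S *v ms)" and "b = ms \<bullet> ((S ** S) *v ms)"
  define N D where "N = - 2 * trace S + 2 * \<kappa> * (real L + 2) * trace S * a + \<kappa> * (real L + 2) * (real L + 3) * b"
    and "D = - 2 * (real L + 1) + \<kappa> * (real L + 2) * (real L + 3) * a"
  have "risk_da ms = \<kappa> * N" "risk_db ms = \<kappa> * D"
    unfolding risk_da_def risk_db_def form_a_def form_b_def N_def D_def a_def b_def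
    by (simp_all add: power2_eq_square algebra_simps)
  then have "\<kappa> * (N + \<sigma> 1 * D) = 0" "D < 0"
    using stationary \<open>risk_db ms < 0\<close> \<kappa>_pos by (auto simp: algebra_simps mult_less_0_iff)
  then have "N = - (\<sigma> 1 * D)" "D < 0" using \<kappa>_pos by (auto simp: add_eq_0_iff)
  then show "\<sigma> 1 = - ((- 2 * trace S + 2 * (lam / real L) * (real L + 2) * trace S * (ms \<bullet> (S *v ms))
                  + (lam / real L) * (real L + 2) * (real L + 3) * (ms \<bullet> ((S ** S) *v ms)))
                / (- 2 * (real L + 1) + (lam / real L) * (real L + 2) * (real L + 3) * (ms \<bullet> (S *v ms))))"
    unfolding \<kappa>_def[symmetric] a_def[symmetric] b_def[symmetric] N_def[symmetric] D_def[symmetric] by simp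
qed

lemma bounded_lipschitz_on_risk:
  assumes "bounded A"
  shows "bounded_lipschitz_on A form_a" "bounded_lipschitz_on A form_b"
    and "bounded_lipschitz_on A risk_da" "bounded_lipschitz_on A risk_db"
    and "bounded_lipschitz_on A risk_grad" "bounded_lipschitz_on A (R_lin lam L S)"
proof -
  have S: "bounded_lipschitz_on A (\<lambda>x. M *v x)" for M :: "real^'n^'n"
    by (rule bounded_linear_bounded_lipschitz_on[OF matrix_vector_mul_bounded_linear assms])
  note rules = bounded_lipschitz_on_add bounded_lipschitz_on_diff bounded_lipschitz_on_mult
    bounded_lipschitz_on_scaleR bounded_lipschitz_on_inner bounded_lipschitz_on_const
    bounded_lipschitz_on_id[OF assms] S
  show a: "bounded_lipschitz_on A form_a" and b: "bounded_lipschitz_on A form_b"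
    unfolding form_a_def[abs_def] form_b_def[abs_def] by (rule rules)+
  note rules = rules a b
  show "bounded_lipschitz_on A risk_da" "bounded_lipschitz_on A risk_db"
    unfolding risk_da_def[abs_def] risk_db_def[abs_def] power2_eq_square by (rule rules)+
  then show "bounded_lipschitz_on A risk_grad"
    unfolding risk_grad_def[abs_def] by (intro rules)
  show "bounded_lipschitz_on A (R_lin lam L S)"
    unfolding R_lin_eq_risk_ab risk_ab_def power2_eq_square by (rule rules)+
qed

sublocale risk_flow: gradient_system "R_lin lam L S" risk_grad
  using has_gradient_R_lin bounded_lipschitz_on_risk(5) by unfold_locales

lemma R_lin_ge_norm_pow4:
  obtains c K where "c > 0" "\<And>x. c * norm x ^ 4 - K \<le> R_lin lam L S x"
proof
  define cA where "cA = 2 * \<kappa> * trace S + 2 * \<kappa> * (real L + 1) * \<sigma> 1"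
  define cB where "cB = \<kappa>\<^sup>2 * (real L + 2) * trace S"
  have "cB > 0" unfolding cB_def using \<kappa>_pos trace_pos by simp
  show "cB / 2 * \<sigma> CARD('n) ^ 2 > 0" using \<open>cB > 0\<close> last_pos by simp
  fix x
  have "2 * \<kappa> * (real L + 1) * form_b x \<le> 2 * \<kappa> * (real L + 1) * (\<sigma> 1 * form_a x)"
    using form_b_le_form_a \<kappa>_pos by (intro mult_left_mono) auto
  moreover have "0 \<le> \<kappa>\<^sup>2 * (real L + 2) * (real L + 3) * form_a x * form_b x"
    using form_a_nonneg form_b_nonneg by simp
  ultimately have "trace S - cA * form_a x + cB * (form_a x)\<^sup>2 \<le> R_lin lam L S x"
    unfolding R_lin_eq_risk_ab risk_ab_def cA_def cB_def by (simp add: algebra_simps)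
  moreover have "cA * form_a x \<le> cB / 2 * (form_a x)\<^sup>2 + cA\<^sup>2 / (2 * cB)"
    using \<open>cB > 0\<close> sum_squares_ge_zero[of "cB * form_a x - cA" 0]
    by (simp add: field_simps power2_eq_square)
  moreover have "\<sigma> CARD('n) ^ 2 * norm x ^ 4 \<le> (form_a x)\<^sup>2"
    using form_a_ge_norm[of x] last_pos power_mono[of "\<sigma> CARD('n) * (norm x)\<^sup>2" "form_a x" 2]
    by (simp add: power_mult_distrib power_mult[symmetric])
  then have "cB / 2 * (\<sigma> CARD('n) ^ 2 * norm x ^ 4) \<le> cB / 2 * (form_a x)\<^sup>2"
    using \<open>cB > 0\<close> by (intro mult_left_mono) auto
  ultimately show "cB / 2 * \<sigma> CARD('n) ^ 2 * norm x ^ 4 - (cA\<^sup>2 / (2 * cB) - trace S) \<le> R_lin lam L S x"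
    by (simp add: algebra_simps)
qed

lemma R_lin_coercive: "filterlim (R_lin lam L S) at_top at_infinity"
proof -
  obtain c K where "c > 0" and lower: "\<And>x. c * norm x ^ 4 - K \<le> R_lin lam L S x"
    using R_lin_ge_norm_pow4 by blast
  have "filterlim (\<lambda>x. - K + c * norm x ^ 4) at_top at_infinity"
    by (intro filterlim_tendsto_add_at_top[OF tendsto_const] filterlim_tendsto_pos_mult_at_top[OF tendsto_const]
        filterlim_pow_at_top[OF _ filterlim_norm_at_top] \<open>c > 0\<close>) simp_all
  then show ?thesis by (rule filterlim_at_top_mono) (use lower in simp)
qed

lemma bounded_sublevel_R_lin: "bounded {x. R_lin lam L S x \<le> z}"
proof -
  obtain r where r: "\<And>x. r \<le> norm x \<Longrightarrow> z + 1 \<le> R_lin lam L S x"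
    using R_lin_coercive unfolding filterlim_at_top eventually_at_infinity by blast
  have "norm x \<le> r" if "R_lin lam L S x \<le> z" for x
    using r[of x] that by linarith
  then have "{x. R_lin lam L S x \<le> z} \<subseteq> cball 0 r" by auto
  then show ?thesis by (rule bounded_subset[OF bounded_cball])
qed

section \<open>The gradient flow of the risk\<close>

lemma grad_flow_coordinate_sq_has_derivative:
  assumes gf: "grad_flow (R_lin lam L S) mu mu0" and j: "j \<in> {1..CARD('n)}" and "t \<ge> 0"
  shows "((\<lambda>t. (u j \<bullet> mu t)\<^sup>2) has_real_derivative
      - 4 * \<sigma> j * (risk_da (mu t) + \<sigma> j * risk_db (mu t)) * (u j \<bullet> mu t)\<^sup>2) (at t within {0..})"
proof -
  have "((\<lambda>t. u j \<bullet> mu t) has_vector_derivative u j \<bullet> - risk_grad (mu t)) (at t within {0..})"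
    by (rule bounded_linear.has_vector_derivative[OF bounded_linear_inner_right
          risk_flow.grad_flow_has_vector_derivative[OF gf \<open>t \<ge> 0\<close>]])
  then have "((\<lambda>t. u j \<bullet> mu t) has_real_derivative
      - (2 * \<sigma> j * (risk_da (mu t) + \<sigma> j * risk_db (mu t)) * (u j \<bullet> mu t))) (at t within {0..})"
    using inner_eigvec_risk_grad[OF j, of "mu t"]
    by (simp add: has_real_derivative_iff_has_vector_derivative inner_minus_right)
  from DERIV_power[OF this, of 2] show ?thesis
    by (rule DERIV_cong) (simp add: algebra_simps power2_eq_square)
qed

text \<open>The squared coordinate solves a linear ODE with bounded coefficient.\<close>
lemma grad_flow_coordinate_zero_iff:
  assumes gf: "grad_flow (R_lin lam L S) mu mu0" and j: "j \<in> {1..CARD('n)}" and "t \<ge> 0"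
  shows "u j \<bullet> mu t = 0 \<longleftrightarrow> u j \<bullet> mu0 = 0"
proof -
  have bdd: "bounded (mu ` {0..})"
    by (rule risk_flow.grad_flow_bounded[OF bounded_sublevel_R_lin gf])
  obtain Ba Bb where Ba: "\<forall>x\<in>mu ` {0..}. norm (risk_da x) \<le> Ba"
    and Bb: "\<forall>x\<in>mu ` {0..}. norm (risk_db x) \<le> Bb"
    using bounded_lipschitz_on_risk(3,4)[OF bdd] unfolding bounded_lipschitz_on_def by blast
  define \<kappa>j where "\<kappa>j t = - 4 * \<sigma> j * (risk_da (mu t) + \<sigma> j * risk_db (mu t))" for t
  have "\<bar>\<kappa>j s\<bar> \<le> 4 * \<sigma> j * (Ba + \<sigma> j * Bb)" if "s \<ge> 0" for s
  proof -
    have "\<bar>risk_da (mu s) + \<sigma> j * risk_db (mu s)\<bar> \<le> \<bar>risk_da (mu s)\<bar> + \<sigma> j * \<bar>risk_db (mu s)\<bar>"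
      using eigval_pos[OF j] by (simp add: abs_mult order_trans[OF abs_triangle_ineq])
    also have "\<dots> \<le> Ba + \<sigma> j * Bb"
      using Ba Bb that eigval_pos[OF j] by (intro add_mono mult_left_mono) auto
    finally show ?thesis unfolding \<kappa>j_def using eigval_pos[OF j] by (simp add: abs_mult)
  qed
  from linear_ode_exp_bounds[where v = "\<lambda>t. (u j \<bullet> mu t)\<^sup>2" and \<kappa> = \<kappa>j, OF _ _ this \<open>t \<ge> 0\<close>]
  have "(u j \<bullet> mu t)\<^sup>2 \<le> (u j \<bullet> mu 0)\<^sup>2 * exp (4 * \<sigma> j * (Ba + \<sigma> j * Bb) * t)"
    "(u j \<bullet> mu 0)\<^sup>2 \<le> (u j \<bullet> mu t)\<^sup>2 * exp (4 * \<sigma> j * (Ba + \<sigma> j * Bb) * t)"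
    unfolding \<kappa>j_def using grad_flow_coordinate_sq_has_derivative[OF gf j] by auto
  then show ?thesis using gf unfolding grad_flow_def by auto
qed

lemma continuous_on_grad_flow:
  assumes "grad_flow (R_lin lam L S) mu mu0"
  shows "continuous_on {0..t} mu"
  unfolding continuous_on_eq_continuous_within
proof
  fix s assume "s \<in> {0..t}"
  then have "continuous (at s within {0..}) mu"
    using risk_flow.grad_flow_has_vector_derivative[OF assms] by (auto intro: has_vector_derivative_continuous)
  then show "continuous (at s within {0..t}) mu" by (rule continuous_within_subset) auto
qed

lemma grad_flow_coordinate_sign:
  assumes gf: "grad_flow (R_lin lam L S) mu mu0" and j: "j \<in> {1..CARD('n)}" and "t \<ge> 0"
  shows "0 \<le> (u j \<bullet> mu t) * (u j \<bullet> mu0)"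
proof (rule ccontr)
  define c where "c s = u j \<bullet> mu s" for s
  assume "\<not> ?thesis"
  then have neg: "c t * c 0 < 0" using gf unfolding c_def grad_flow_def by simp
  have cont: "continuous_on {0..t} c"
    unfolding c_def by (intro continuous_intros continuous_on_grad_flow[OF gf])
  obtain s where "0 \<le> s" "c s = 0"
  proof (cases "c 0 < 0")
    case True
    then have "0 \<le> c t" using neg by (simp add: mult_less_0_iff)
    then show thesis using IVT'[of c 0 0 t, OF _ _ \<open>t \<ge> 0\<close> cont] True that by auto
  next
    case False
    then have "c t \<le> 0" using neg by (simp add: mult_less_0_iff)
    then show thesis using IVT2'[of c t 0 0, OF _ _ \<open>t \<ge> 0\<close> cont] False that by auto
  qed
  then have "c 0 = 0"
    using grad_flow_coordinate_zero_iff[OF gf j] gf unfolding c_def grad_flow_def by simp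
  then show False using neg by simp
qed

lemma grad_flow_limit_points_same_sign:
  assumes gf: "grad_flow (R_lin lam L S) mu mu0" and j: "j \<in> {1..CARD('n)}"
    and s1: "filterlim s1 at_top sequentially" "(\<lambda>k. mu (s1 k)) \<longlonglongrightarrow> q1"
    and s2: "filterlim s2 at_top sequentially" "(\<lambda>k. mu (s2 k)) \<longlonglongrightarrow> q2"
  shows "0 \<le> (u j \<bullet> q1) * (u j \<bullet> q2)"
proof -
  define c0 where "c0 = u j \<bullet> mu0"
  have limit: "0 \<le> (u j \<bullet> q) * c0 \<and> (c0 = 0 \<longrightarrow> u j \<bullet> q = 0)"
    if "filterlim s at_top sequentially" "(\<lambda>k. mu (s k)) \<longlonglongrightarrow> q" for s q
  proof -
    have lim: "(\<lambda>k. u j \<bullet> mu (s k)) \<longlonglongrightarrow> u j \<bullet> q" by (intro tendsto_intros that(2))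
    have ev: "\<forall>\<^sub>F k in sequentially. s k \<ge> 0" using that(1) by (simp add: filterlim_at_top)
    have "\<forall>\<^sub>F k in sequentially. 0 \<le> (u j \<bullet> mu (s k)) * c0"
      using ev by (rule eventually_mono) (use grad_flow_coordinate_sign[OF gf j] c0_def in simp)
    then have "0 \<le> (u j \<bullet> q) * c0"
      by (intro tendsto_lowerbound[OF tendsto_mult[OF lim tendsto_const]]) simp_all
    moreover have "u j \<bullet> q = 0" if "c0 = 0"
    proof -
      have "\<forall>\<^sub>F k in sequentially. u j \<bullet> mu (s k) = 0"
        using ev by (rule eventually_mono) (use grad_flow_coordinate_zero_iff[OF gf j] that c0_def in simp)
      then have "(\<lambda>k. u j \<bullet> mu (s k)) \<longlonglongrightarrow> 0" by (rule tendsto_eventually)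
      then show ?thesis using lim LIMSEQ_unique by blast
    qed
    ultimately show ?thesis by blast
  qed
  show ?thesis
  proof (cases "c0 = 0")
    case False
    have "0 \<le> ((u j \<bullet> q1) * c0) * ((u j \<bullet> q2) * c0)" using limit[OF s1] limit[OF s2] by simp
    also have "\<dots> = ((u j \<bullet> q1) * (u j \<bullet> q2)) * c0\<^sup>2" by algebra
    finally show ?thesis using False by (simp add: zero_le_mult_iff)
  qed (use limit[OF s1] in simp)
qed

lemma grad_flow_converges:
  assumes gf: "grad_flow (R_lin lam L S) mu mu0"
  obtains p where "risk_grad p = 0" "(mu \<longlongrightarrow> p) at_top"
proof -
  have bdd: "bounded (mu ` {0..})"
    by (rule risk_flow.grad_flow_bounded[OF bounded_sublevel_R_lin gf])
  obtain l where energy: "((\<lambda>t. R_lin lam L S (mu t)) \<longlongrightarrow> l) at_top"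
    using risk_flow.grad_flow_energy_tendsto[OF gf R_lin_ge_ray_min] by blast
  note limit_point = risk_flow.grad_flow_limit_point[OF gf bdd R_lin_ge_ray_min energy]
  obtain p s where "filterlim s at_top sequentially" "(\<lambda>k. mu (s k)) \<longlonglongrightarrow> p" "(mu \<longlongrightarrow> p) at_top"
  proof (rule tendsto_if_limit_points_unique[OF bdd])
    fix s1 s2 q1 q2
    assume 1: "filterlim s1 at_top sequentially" "(\<lambda>k. mu (s1 k)) \<longlonglongrightarrow> q1"
      and 2: "filterlim s2 at_top sequentially" "(\<lambda>k. mu (s2 k)) \<longlonglongrightarrow> q2"
    show "q1 = q2"
    proof (rule critical_point_eq)
      show "risk_grad q1 = 0" "risk_grad q2 = 0" using limit_point(1)[OF 1] limit_point(1)[OF 2] .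
      show "R_lin lam L S q1 = R_lin lam L S q2" using limit_point(2)[OF 1] limit_point(2)[OF 2] by simp
      show "0 \<le> (u j \<bullet> q1) * (u j \<bullet> q2)" if "j \<in> {1..CARD('n)}" for j
        by (rule grad_flow_limit_points_same_sign[OF gf that 1 2])
    qed
  qed
  then show thesis using that limit_point(1) by blast
qed

text \<open>Near a critical point with vanishing first coordinate, the squared first coordinate increases
  along the flow.\<close>
lemma grad_flow_limit_first_coordinate:
  assumes gf: "grad_flow (R_lin lam L S) mu mu0" and "u 1 \<bullet> mu0 \<noteq> 0"
    and p: "risk_grad p = 0" "(mu \<longlongrightarrow> p) at_top"
  shows "u 1 \<bullet> p \<noteq> 0"
proof
  assume "u 1 \<bullet> p = 0"
  define v where "v t = (u 1 \<bullet> mu t)\<^sup>2" for t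
  have "((\<lambda>t. risk_da (mu t) + \<sigma> 1 * risk_db (mu t)) \<longlongrightarrow> risk_da p + \<sigma> 1 * risk_db p) at_top"
    using bounded_lipschitz_on_risk(3,4)
    by (intro tendsto_intros isCont_tendsto_compose[OF isCont_if_bounded_lipschitz_on p(2)])
  then have "\<forall>\<^sub>F t in at_top. risk_da (mu t) + \<sigma> 1 * risk_db (mu t) < 0"
    using critical_point_unstable_first[OF p(1) \<open>u 1 \<bullet> p = 0\<close>] by (rule order_tendstoD)
  then obtain N where N: "\<And>t. t \<ge> N \<Longrightarrow> risk_da (mu t) + \<sigma> 1 * risk_db (mu t) < 0"
    unfolding eventually_at_top_linorder by blast
  define T where "T = max N 0"
  have "T \<ge> 0" and T: "\<And>t. t \<ge> T \<Longrightarrow> risk_da (mu t) + \<sigma> 1 * risk_db (mu t) < 0"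
    using N unfolding T_def by auto
  have "v T \<le> v t" if "T \<le> t" for t
  proof -
    have "- v t \<le> - v T"
    proof (rule DERIV_within_nonpos_imp_decreasing[OF that])
      fix s assume "T \<le> s"
      then have "0 < - 4 * \<sigma> 1 * (risk_da (mu s) + \<sigma> 1 * risk_db (mu s))"
        using T eigval_pos[OF one_mem_indices] by (simp add: mult_pos_neg)
      moreover have "0 \<le> v s" unfolding v_def by simp
      ultimately show "- (- 4 * \<sigma> 1 * (risk_da (mu s) + \<sigma> 1 * risk_db (mu s)) * v s) \<le> 0"
        by (simp only: neg_le_0_iff_le) (rule mult_nonneg_nonneg, simp_all)
      show "((\<lambda>t. - v t) has_real_derivative
          - (- 4 * \<sigma> 1 * (risk_da (mu s) + \<sigma> 1 * risk_db (mu s)) * v s)) (at s within {0..})"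
        unfolding v_def using \<open>T \<ge> 0\<close> \<open>T \<le> s\<close>
        by (intro DERIV_minus grad_flow_coordinate_sq_has_derivative[OF gf one_mem_indices]) simp
    qed (use \<open>T \<ge> 0\<close> in auto)
    then show ?thesis by simp
  qed
  moreover have "(v \<longlongrightarrow> 0) at_top"
    using tendsto_power[OF tendsto_inner[OF tendsto_const p(2)], of "u 1" 2] \<open>u 1 \<bullet> p = 0\<close>
    unfolding v_def by simp
  ultimately have "v T \<le> 0"
    by (intro tendsto_lowerbound[of v 0 at_top "v T"]) (auto simp: eventually_at_top_linorder)
  then have "u 1 \<bullet> mu T = 0" unfolding v_def by simp
  then show False using grad_flow_coordinate_zero_iff[OF gf one_mem_indices \<open>T \<ge> 0\<close>] assms(2) by simp
qed

lemma grad_flow_generic_limit: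
  assumes gf: "grad_flow (R_lin lam L S) mu mu0" and "u 1 \<bullet> mu0 \<noteq> 0"
  shows "(mu \<longlongrightarrow> \<alpha> *\<^sub>R u 1) at_top \<or> (mu \<longlongrightarrow> - (\<alpha> *\<^sub>R u 1)) at_top"
proof -
  obtain p where p: "risk_grad p = 0" "(mu \<longlongrightarrow> p) at_top" by (rule grad_flow_converges[OF gf])
  then show ?thesis
    using critical_point_first_coordinate[OF p(1) grad_flow_limit_first_coordinate[OF gf assms(2) p]] by auto
qed

end

theorem proposition16:
  fixes lam :: real and L :: nat and S :: "real^'n^'n"
    and \<sigma> :: "nat \<Rightarrow> real" and u :: "nat \<Rightarrow> real^'n"
  assumes lam_pos: "lam > 0"
    and L_ge: "L \<ge> 1"
    and sym: "transpose S = S"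
    and posdef: "\<And>x. x \<noteq> 0 \<Longrightarrow> x \<bullet> (S *v x) > 0"
    and simple: "\<And>i j. 1 \<le> i \<Longrightarrow> i < j \<Longrightarrow> j \<le> CARD('n) \<Longrightarrow> \<sigma> j < \<sigma> i"
    and last_pos: "\<sigma> CARD('n) > 0"
    and eigvec: "\<And>i. 1 \<le> i \<Longrightarrow> i \<le> CARD('n) \<Longrightarrow> S *v u i = \<sigma> i *\<^sub>R u i"
    and unit: "\<And>i. 1 \<le> i \<Longrightarrow> i \<le> CARD('n) \<Longrightarrow> norm (u i) = 1"
  shows
    "filterlim (R_lin lam L S) at_top at_infinity
     \<and> locally_lipschitz (R_lin lam L S)
     \<and> (\<forall>mu0. \<exists>mu. grad_flow (R_lin lam L S) mu mu0)
     \<and> (\<forall>mu0 mu. grad_flow (R_lin lam L S) mu mu0 \<longrightarrow>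
          (\<exists>p. critical_point (R_lin lam L S) p \<and> (mu \<longlongrightarrow> p) at_top))
     \<and> {mu. \<forall>nu. R_lin lam L S mu \<le> R_lin lam L S nu}
          = {alpha1_star lam L S (\<sigma> 1) *\<^sub>R u 1, - (alpha1_star lam L S (\<sigma> 1) *\<^sub>R u 1)}
     \<and> negligible {mu0. \<exists>mu. grad_flow (R_lin lam L S) mu mu0 \<and>
          \<not> ((mu \<longlongrightarrow> alpha1_star lam L S (\<sigma> 1) *\<^sub>R u 1) at_top
             \<or> (mu \<longlongrightarrow> - (alpha1_star lam L S (\<sigma> 1) *\<^sub>R u 1)) at_top)}
     \<and> (\<forall>ms \<in> {alpha1_star lam L S (\<sigma> 1) *\<^sub>R u 1, - (alpha1_star lam L S (\<sigma> 1) *\<^sub>R u 1)}.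
          (ms /\<^sub>R norm ms = u 1 \<or> ms /\<^sub>R norm ms = - u 1)
          \<and> \<sigma> 1 = - ((- 2 * trace S
                        + 2 * (lam / real L) * (real L + 2) * trace S * (ms \<bullet> (S *v ms))
                        + (lam / real L) * (real L + 2) * (real L + 3) * (ms \<bullet> ((S ** S) *v ms)))
                      / (- 2 * (real L + 1)
                        + (lam / real L) * (real L + 2) * (real L + 3) * (ms \<bullet> (S *v ms)))))"
proof -
  interpret linear_attention S \<sigma> u lam L
    using assms by unfold_locales auto
  have "negligible {x. u 1 \<bullet> x = 0}"
    using unit[OF order_refl] by (intro negligible_hyperplane) auto
  moreover have "{mu0. \<exists>mu. grad_flow (R_lin lam L S) mu mu0 \<and>
      \<not> ((mu \<longlongrightarrow> \<alpha> *\<^sub>R u 1) at_top \<or> (mu \<longlongrightarrow> - (\<alpha> *\<^sub>R u 1)) at_top)} \<subseteq> {x. u 1 \<bullet> x = 0}"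
    using grad_flow_generic_limit by blast
  moreover have "\<exists>p. critical_point (R_lin lam L S) p \<and> (mu \<longlongrightarrow> p) at_top"
    if "grad_flow (R_lin lam L S) mu mu0" for mu mu0
    using grad_flow_converges[OF that] has_gradient_R_lin unfolding critical_point_def by metis
  moreover have "\<exists>mu. grad_flow (R_lin lam L S) mu mu0" for mu0
    using risk_flow.grad_flow_exists[OF bounded_sublevel_R_lin] by blast
  ultimately show ?thesis
    using R_lin_coercive minimizers_R_lin minimizer_direction_and_eigval negligible_subset
      locally_lipschitz_if_bounded_lipschitz_on[OF bounded_lipschitz_on_risk(6)] by blast
qed

end
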